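(* Let $\mathcal{F}\subset L_2([0,1])$ and let $(\mathcal{E},\mathcal{D})$ be a compression code for $\mathcal{F}$ at rate $r$ with distortion $\delta$ and codebook $\mathcal{C}$. Let $W_1,\dots,W_d$ be independent standard Wiener processes on $[0,1]$ and define $\mathcal{A}:L_2([0,1])\to\mathbb{R}^d$ by $\mathcal{A}(f)_i=\int_0^1 f(t)\,dW_i(t)$, $i=1,\dots,d$. For $f_o\in\mathcal{F}$ let ${\bf y}_o=\mathcal{A}(f_o)$ and let $\hat f_o$ be any element of $\arg\min_{g\in\mathcal{C}}\|{\bf y}_o-\mathcal{A}(g)\|_2^2$. Then for arbitrary $\tau_1>0$ and $\tau_2\in(0,1)$, \[ \|\hat f_o-f_o\|_2\le\delta\sqrt{\frac{1+\tau_1}{1-\tau_2}} \] with probability at least \[ 1-2^{r}{\rm e}^{\frac d2(\tau_2+\log(1-\tau_2))}-{\rm e}^{-\frac d2(\tau_1-\log(1+\tau_1))}. \]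
   Context: $L_2([0,1])$ is the set of real functions on $[0,1]$ with $\|f\|_2=(\int_0^1 f(t)^2dt)^{1/2}<\infty$; the integrals $\int_0^1 f\,dW_i$ are Itô integrals. A compression code for $\mathcal{F}$ at rate $r$ is a pair of maps $\mathcal{E}:\mathcal{F}\to\{1,\dots,2^r\}$, $\mathcal{D}:\{1,\dots,2^r\}\to L_2([0,1])$; its codebook is $\mathcal{C}=\{\mathcal{D}(\mathcal{E}(f)):f\in\mathcal{F}\}$ and its distortion is $\delta=\sup_{f\in\mathcal{F}}\|f-\mathcal{D}(\mathcal{E}(f))\|_2$. $\log$ is the natural logarithm. The probability is over the Wiener processes. *)

theory Defs
  imports "HOL-Probability.Probability"
begin

definition L2_01 :: "(real \<Rightarrow> real) set" where
  "L2_01 = {f. set_borel_measurable lborel {0..1} f \<and>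
               set_integrable lborel {0..1} (\<lambda>t. (f t)\<^sup>2)}"

definition L2norm01 :: "(real \<Rightarrow> real) \<Rightarrow> real" where
  "L2norm01 f = sqrt (LINT t:{0..1}|lborel. (f t)\<^sup>2)"

definition wiener_process01 :: "'a measure \<Rightarrow> (real \<Rightarrow> 'a \<Rightarrow> real) \<Rightarrow> bool" where
  "wiener_process01 M W \<longleftrightarrow>
     (\<forall>t\<in>{0..1}. W t \<in> borel_measurable M) \<and>
     (\<forall>\<omega>\<in>space M. W 0 \<omega> = 0) \<and>
     (\<forall>\<omega>\<in>space M. continuous_on {0..1} (\<lambda>t. W t \<omega>)) \<and>
     (\<forall>s t. 0 \<le> s \<and> s < t \<and> t \<le> 1 \<longrightarrow>
        distributed M lborel (\<lambda>\<omega>. W t \<omega> - W s \<omega>)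
          (\<lambda>x. ennreal (normal_density 0 (sqrt (t - s)) x))) \<and>
     (\<forall>(n::nat) (ts::nat \<Rightarrow> real).
        (\<forall>k<n. 0 \<le> ts k \<and> ts k < ts (Suc k) \<and> ts (Suc k) \<le> 1) \<longrightarrow>
        prob_space.indep_vars M (\<lambda>_. borel) (\<lambda>k \<omega>. W (ts (Suc k)) \<omega> - W (ts k) \<omega>) {..<n})"

definition partition01 :: "nat \<Rightarrow> (nat \<Rightarrow> real) \<Rightarrow> bool" where
  "partition01 n ts \<longleftrightarrow> n > 0 \<and> ts 0 = 0 \<and> ts n = 1 \<and> (\<forall>k<n. ts k < ts (Suc k))"

definition step_fun :: "nat \<Rightarrow> (nat \<Rightarrow> real) \<Rightarrow> (nat \<Rightarrow> real) \<Rightarrow> real \<Rightarrow> real" where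
  "step_fun n ts cs s = (\<Sum>k<n. cs k * indicator {ts k..<ts (Suc k)} s)"

definition step_ito :: "(real \<Rightarrow> 'a \<Rightarrow> real) \<Rightarrow> nat \<Rightarrow> (nat \<Rightarrow> real) \<Rightarrow> (nat \<Rightarrow> real) \<Rightarrow> 'a \<Rightarrow> real" where
  "step_ito W n ts cs \<omega> = (\<Sum>k<n. cs k * (W (ts (Suc k)) \<omega> - W (ts k) \<omega>))"

definition is_ito_integral ::
  "'a measure \<Rightarrow> (real \<Rightarrow> 'a \<Rightarrow> real) \<Rightarrow> (real \<Rightarrow> real) \<Rightarrow> ('a \<Rightarrow> real) \<Rightarrow> bool" where
  "is_ito_integral M W f X \<longleftrightarrow>
     X \<in> borel_measurable M \<and>
     (\<exists>(n::nat \<Rightarrow> nat) ts cs.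
        (\<forall>j. partition01 (n j) (ts j)) \<and>
        ((\<lambda>j. L2norm01 (\<lambda>s. f s - step_fun (n j) (ts j) (cs j) s)) \<longlonglongrightarrow> 0) \<and>
        (\<forall>j. integrable M (\<lambda>\<omega>. (X \<omega> - step_ito W (n j) (ts j) (cs j) \<omega>)\<^sup>2)) \<and>
        ((\<lambda>j. integral\<^sup>L M (\<lambda>\<omega>. (X \<omega> - step_ito W (n j) (ts j) (cs j) \<omega>)\<^sup>2)) \<longlonglongrightarrow> 0))"

definition compression_code ::
  "(real \<Rightarrow> real) set \<Rightarrow> nat \<Rightarrow> ((real \<Rightarrow> real) \<Rightarrow> nat) \<Rightarrow> (nat \<Rightarrow> (real \<Rightarrow> real)) \<Rightarrow> bool" where
  "compression_code F r Enc Dec \<longleftrightarrow>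
     (\<forall>f\<in>F. Enc f \<in> {1..2^r}) \<and> (\<forall>k\<in>{1..2^r}. Dec k \<in> L2_01)"

definition codebook ::
  "(real \<Rightarrow> real) set \<Rightarrow> ((real \<Rightarrow> real) \<Rightarrow> nat) \<Rightarrow> (nat \<Rightarrow> (real \<Rightarrow> real)) \<Rightarrow> (real \<Rightarrow> real) set" where
  "codebook F Enc Dec = {Dec (Enc f) | f. f \<in> F}"

text \<open>Distortion, as an extended real (it may be infinite).\<close>
definition distortion ::
  "(real \<Rightarrow> real) set \<Rightarrow> ((real \<Rightarrow> real) \<Rightarrow> nat) \<Rightarrow> (nat \<Rightarrow> (real \<Rightarrow> real)) \<Rightarrow> ereal" where
  "distortion F Enc Dec = (SUP f\<in>F. ereal (L2norm01 (\<lambda>t. f t - Dec (Enc f) t)))"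

end

theory Submission
  imports Defs
begin

(*
  For a fixed g, the measurement differences A_i(f_o) - A_i(g) are independent N(0, \<parallel>f_o - g\<parallel>^2)
  variables, so \<parallel>A(f_o) - A(g)\<parallel>^2 / \<parallel>f_o - g\<parallel>^2 is chi-square with d degrees of freedom, and
  Chernoff bounds on its moment generating function control both tails. With probability as
  stated (a union bound over the at most 2^r codewords), the codeword Dec (Enc f_o) is measured
  within d (1 + \<tau>\<^sub>1) \<delta>^2 of f_o, while every codeword g farther than \<delta> sqrt ((1 + \<tau>\<^sub>1) / (1 - \<tau>\<^sub>2))
  from f_o is measured at least d (1 - \<tau>\<^sub>2) \<parallel>f_o - g\<parallel>^2 > d (1 + \<tau>\<^sub>1) \<delta>^2 away, so it cannot be a
  nearest codeword.

  The Gaussian moment generating function is exact for Ito integrals of step functions, which are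
  finite sums of independent Wiener increments. It passes to general integrands as an upper bound,
  by Fatou's lemma along a subsequence of step approximations that converges almost everywhere.
*)

lemma partition01_less:
  assumes "partition01 n ts" "i < j" "j \<le> n"
  shows "ts i < ts j"
  using assms(2,3)
proof (induction j)
  case (Suc j)
  have "ts j < ts (Suc j)" using assms(1) Suc.prems unfolding partition01_def by auto
  then show ?case using Suc by (cases "i = j") auto
qed simp

lemma partition01_le:
  assumes "partition01 n ts" "i \<le> j" "j \<le> n"
  shows "ts i \<le> ts j"
  using partition01_less[OF assms(1)] assms(2,3) by (cases "i = j") (auto intro: less_imp_le)

lemma partition01_bounds:
  assumes "partition01 n ts" "k \<le> n"
  shows "0 \<le> ts k" "ts k \<le> 1"
  using partition01_le[OF assms(1), of 0 k] partition01_le[OF assms(1), of k n] assms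
  unfolding partition01_def by auto

lemma partition01_inj:
  assumes "partition01 n ts" "i \<le> n" "j \<le> n" "ts i = ts j"
  shows "i = j"
  using partition01_less[OF assms(1), of i j] partition01_less[OF assms(1), of j i] assms
  by (cases i j rule: linorder_cases) auto

lemma partition01_cell:
  assumes "partition01 n ts" "0 \<le> s" "s < 1"
  obtains k where "k < n" "ts k \<le> s" "s < ts (Suc k)"
proof -
  define K where "K = {k. k \<le> n \<and> ts k \<le> s}"
  have fin: "finite K" unfolding K_def by auto
  have "0 \<in> K" using assms unfolding K_def partition01_def by auto
  then have kK: "Max K \<in> K" using Max_in[OF fin] by auto
  have kn: "Max K < n"
  proof -
    have "Max K \<le> n" "ts (Max K) \<le> s" using kK K_def by auto
    then show ?thesis using assms(1,3) unfolding partition01_def by (cases "Max K = n") auto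
  qed
  have "\<not> ts (Suc (Max K)) \<le> s"
  proof
    assume "ts (Suc (Max K)) \<le> s"
    then have "Suc (Max K) \<in> K" using kn K_def by auto
    then show False using Max_ge[OF fin] by fastforce
  qed
  then show ?thesis using that kn kK K_def by auto
qed

lemma step_fun_on_cell:
  assumes "partition01 n ts" "k < n" "ts k \<le> s" "s < ts (Suc k)"
  shows "step_fun n ts cs s = cs k"
proof -
  have "step_fun n ts cs s = (\<Sum>k'<n. if k' = k then cs k else 0)"
    unfolding step_fun_def
  proof (intro sum.cong refl)
    fix k' assume k': "k' \<in> {..<n}"
    show "cs k' * indicator {ts k'..<ts (Suc k')} s = (if k' = k then cs k else 0)"
    proof (cases k' k rule: linorder_cases)
      case less
      then have "ts (Suc k') \<le> ts k" using partition01_le[OF assms(1), of "Suc k'" k] assms by auto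
      then show ?thesis using less assms by (auto simp: indicator_def)
    next
      case greater
      then have "ts (Suc k) \<le> ts k'" using partition01_le[OF assms(1), of "Suc k" k'] assms k' by auto
      then show ?thesis using greater assms by (auto simp: indicator_def)
    qed (use assms in \<open>auto simp: indicator_def\<close>)
  qed
  also have "\<dots> = cs k" using assms(2) by (simp add: sum.delta)
  finally show ?thesis .
qed

lemma step_fun_outside:
  assumes "partition01 n ts" "s < 0 \<or> 1 \<le> s"
  shows "step_fun n ts cs s = 0"
  unfolding step_fun_def
proof (intro sum.neutral ballI)
  fix k assume "k \<in> {..<n}"
  then have "0 \<le> ts k" "ts (Suc k) \<le> 1" using partition01_bounds[OF assms(1)] by auto
  then show "cs k * indicator {ts k..<ts (Suc k)} s = 0" using assms(2) by (auto simp: indicator_def)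
qed

lemma step_fun_diff:
  "step_fun m u e s - step_fun m u e' s = step_fun m u (\<lambda>p. e p - e' p) s"
  unfolding step_fun_def by (simp add: sum_subtractf left_diff_distrib)

lemma step_ito_diff:
  "step_ito W m u e \<omega> - step_ito W m u e' \<omega> = step_ito W m u (\<lambda>p. e p - e' p) \<omega>"
  unfolding step_ito_def by (simp add: sum_subtractf left_diff_distrib)

lemma partition01_of_finite_set:
  fixes T :: "real set"
  assumes "finite T" "T \<subseteq> {0..1}" "0 \<in> T" "1 \<in> T"
  obtains m u where "partition01 m u" "T \<subseteq> u ` {..m}"
proof -
  define L where "L = sorted_list_of_set T"
  have setL: "set L = T" unfolding L_def using assms(1) by simp
  have sL: "sorted_wrt (<) L" unfolding L_def by (rule strict_sorted_list_of_set)
  have lt: "L ! p < L ! q" if "p < q" "q < length L" for p q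
    using sorted_wrt_nth_less[OF sL that] .
  obtain q0 q1 where q0: "q0 < length L" "L ! q0 = 0" and q1: "q1 < length L" "L ! q1 = 1"
    using assms(3,4) unfolding setL[symmetric] in_set_conv_nth by metis
  define m where "m = length L - 1"
  have "q0 \<noteq> q1" using q0 q1 by auto
  then have m: "0 < m" "Suc m = length L" using q0 q1 unfolding m_def by linarith+
  have in01: "0 \<le> L ! p \<and> L ! p \<le> 1" if "p < length L" for p
    using assms(2) setL that by (metis atLeastAtMost_iff nth_mem subsetD)
  have "0 \<le> L ! 0" "L ! m \<le> 1" using in01[of 0] in01[of m] m by force+
  then have "L ! 0 = 0" "L ! m = 1"
    using lt[of 0 q0] q0 lt[of q1 m] q1 m by (cases "q0 = 0"; cases "q1 = m"; force)+
  then have "partition01 m (\<lambda>p. L ! p)"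
    unfolding partition01_def using m lt by auto
  moreover have "T \<subseteq> (\<lambda>p. L ! p) ` {..m}"
    using m unfolding setL[symmetric] by (auto simp: in_set_conv_nth image_iff) (metis atMost_iff less_Suc_eq_le)
  ultimately show ?thesis by (rule that)
qed

lemma partition01_common_refinement:
  assumes "partition01 n ts" "partition01 n' ts'"
  obtains m u where "partition01 m u" "ts ` {..n} \<subseteq> u ` {..m}" "ts' ` {..n'} \<subseteq> u ` {..m}"
proof -
  have "ts ` {..n} \<union> ts' ` {..n'} \<subseteq> {0..1}"
    using partition01_bounds[OF assms(1)] partition01_bounds[OF assms(2)] by auto
  moreover have "0 \<in> ts ` {..n}" "1 \<in> ts ` {..n}"
    using assms(1) unfolding partition01_def by (metis atMost_iff image_eqI le0 order_refl)+
  moreover have "finite (ts ` {..n} \<union> ts' ` {..n'})" by simp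
  ultimately obtain m u where "partition01 m u" "ts ` {..n} \<union> ts' ` {..n'} \<subseteq> u ` {..m}"
    using partition01_of_finite_set[of "ts ` {..n} \<union> ts' ` {..n'}"] by blast
  then show ?thesis using that by blast
qed

lemma step_fun_refine:
  assumes pu: "partition01 m u" and pt: "partition01 n ts" and sub: "ts ` {..n} \<subseteq> u ` {..m}"
  shows "step_fun n ts cs s = step_fun m u (\<lambda>p. step_fun n ts cs (u p)) s"
proof (cases "s < 0 \<or> 1 \<le> s")
  case True
  then show ?thesis using step_fun_outside[OF pu] step_fun_outside[OF pt] by metis
next
  case False
  then have s: "0 \<le> s" "s < 1" by auto
  obtain p where p: "p < m" "u p \<le> s" "s < u (Suc p)" by (rule partition01_cell[OF pu s])
  obtain k where k: "k < n" "ts k \<le> s" "s < ts (Suc k)" by (rule partition01_cell[OF pt s])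
  have "ts k \<in> u ` {..m}" "ts (Suc k) \<in> u ` {..m}" using sub k(1) by auto
  then obtain a b where a: "a \<le> m" "ts k = u a" and b: "b \<le> m" "ts (Suc k) = u b" by auto
  have "a \<le> p"
    using partition01_le[OF pu, of "Suc p" a] a p k by (cases "a \<le> p") auto
  then have 1: "ts k \<le> u p" using partition01_le[OF pu, of a p] a p by auto
  have "p < b"
    using partition01_le[OF pu, of b p] b p k by (cases "p < b") auto
  then have 2: "u p < ts (Suc k)" using partition01_less[OF pu, of p b] b by auto
  show ?thesis
    using step_fun_on_cell[OF pu p] step_fun_on_cell[OF pt k(1) 1 2] step_fun_on_cell[OF pt k]
    by simp
qed

lemma sum_consecutive_blocks:
  fixes g :: "nat \<Rightarrow> 'b::comm_monoid_add"
  assumes "\<And>k. k < n \<Longrightarrow> a k \<le> a (Suc k)"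
  shows "(\<Sum>k<n. \<Sum>p\<in>{a k..<a (Suc k)}. g p) = (\<Sum>p\<in>{a 0..<a n}. g p)"
  using assms
proof (induction n)
  case (Suc n)
  have "a 0 \<le> a j" if "j \<le> n" for j
    using that Suc.prems by (induction j) (auto intro: order_trans)
  then show ?case
    using Suc Suc.prems[of n] sum.atLeastLessThan_concat[of "a 0" "a n" "a (Suc n)" g] by simp
qed simp

lemma step_ito_refine:
  assumes pu: "partition01 m u" and pt: "partition01 n ts" and sub: "ts ` {..n} \<subseteq> u ` {..m}"
  shows "step_ito W n ts cs \<omega> = step_ito W m u (\<lambda>p. step_fun n ts cs (u p)) \<omega>"
proof -
  have "\<forall>k\<in>{..n}. \<exists>p. p \<in> {..m} \<and> ts k = u p" using sub by blast
  then obtain a where "\<forall>k\<in>{..n}. a k \<in> {..m} \<and> ts k = u (a k)" by (metis bchoice)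
  then have a: "\<And>k. k \<le> n \<Longrightarrow> a k \<le> m \<and> ts k = u (a k)" by auto
  have amono: "a k < a j" if "k < j" "j \<le> n" for k j
    using partition01_le[OF pu, of "a j" "a k"] partition01_less[OF pt, of k j] a[of k] a[of j] that
    by (cases "a k < a j") auto
  have a0: "a 0 = 0" and an: "a n = m"
    using partition01_inj[OF pu, of "a 0" 0] partition01_inj[OF pu, of "a n" m] a[of 0] a[of n] pu pt
    unfolding partition01_def by auto
  define F where "F p = W (u p) \<omega>" for p
  define e where "e p = step_fun n ts cs (u p)" for p
  have cell: "cs k * (F (a (Suc k)) - F (a k)) = (\<Sum>p\<in>{a k..<a (Suc k)}. e p * (F (Suc p) - F p))"
    if k: "k < n" for k
  proof -
    have "cs k * (F (a (Suc k)) - F (a k)) = (\<Sum>p\<in>{a k..<a (Suc k)}. cs k * (F (Suc p) - F p))"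
      using sum_Suc_diff'[of "a k" "a (Suc k)" F] amono[of k "Suc k"] k
      by (simp add: sum_distrib_left[symmetric])
    also have "\<dots> = (\<Sum>p\<in>{a k..<a (Suc k)}. e p * (F (Suc p) - F p))"
    proof (intro sum.cong refl)
      fix p assume p: "p \<in> {a k..<a (Suc k)}"
      have "ts k \<le> u p" using partition01_le[OF pu, of "a k" p] a[of k] a[of "Suc k"] p k by auto
      moreover have "u p < ts (Suc k)" using partition01_less[OF pu, of p "a (Suc k)"] a[of "Suc k"] p k by auto
      ultimately show "cs k * (F (Suc p) - F p) = e p * (F (Suc p) - F p)"
        unfolding e_def using step_fun_on_cell[OF pt k] by simp
    qed
    finally show ?thesis .
  qed
  have "step_ito W n ts cs \<omega> = (\<Sum>k<n. cs k * (F (a (Suc k)) - F (a k)))"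
    unfolding step_ito_def F_def using a by (intro sum.cong) auto
  also have "\<dots> = (\<Sum>k<n. \<Sum>p\<in>{a k..<a (Suc k)}. e p * (F (Suc p) - F p))"
    using cell by simp
  also have "\<dots> = (\<Sum>p\<in>{a 0..<a n}. e p * (F (Suc p) - F p))"
    by (rule sum_consecutive_blocks) (use amono in \<open>auto intro: less_imp_le\<close>)
  also have "\<dots> = step_ito W m u e \<omega>"
    unfolding step_ito_def F_def a0 an by (simp add: atLeast0LessThan)
  finally show ?thesis unfolding e_def .
qed

lemma step_diff_common_partition:
  assumes "partition01 n1 ts1" "partition01 n2 ts2"
  obtains m u e where "partition01 m u"
    "\<And>\<omega>. step_ito W n1 ts1 c1 \<omega> - step_ito W n2 ts2 c2 \<omega> = step_ito W m u e \<omega>"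
    "(\<lambda>s. step_fun n1 ts1 c1 s - step_fun n2 ts2 c2 s) = step_fun m u e"
proof -
  obtain m u where pu: "partition01 m u"
    and s1: "ts1 ` {..n1} \<subseteq> u ` {..m}" and s2: "ts2 ` {..n2} \<subseteq> u ` {..m}"
    using partition01_common_refinement[OF assms] .
  show ?thesis
  proof (rule that[OF pu])
    fix \<omega>
    show "step_ito W n1 ts1 c1 \<omega> - step_ito W n2 ts2 c2 \<omega>
        = step_ito W m u (\<lambda>p. step_fun n1 ts1 c1 (u p) - step_fun n2 ts2 c2 (u p)) \<omega>"
      unfolding step_ito_refine[OF pu assms(1) s1] step_ito_refine[OF pu assms(2) s2] step_ito_diff ..
  next
    show "(\<lambda>s. step_fun n1 ts1 c1 s - step_fun n2 ts2 c2 s)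
        = step_fun m u (\<lambda>p. step_fun n1 ts1 c1 (u p) - step_fun n2 ts2 c2 (u p))"
    proof
      fix s show "step_fun n1 ts1 c1 s - step_fun n2 ts2 c2 s
          = step_fun m u (\<lambda>p. step_fun n1 ts1 c1 (u p) - step_fun n2 ts2 c2 (u p)) s"
        unfolding step_fun_refine[OF pu assms(1) s1, of c1 s] step_fun_refine[OF pu assms(2) s2, of c2 s]
          step_fun_diff ..
    qed
  qed
qed

definition square_integrable :: "'b measure \<Rightarrow> ('b \<Rightarrow> real) \<Rightarrow> bool" where
  "square_integrable N F \<longleftrightarrow> F \<in> borel_measurable N \<and> integrable N (\<lambda>x. (F x)\<^sup>2)"

definition L2_seminorm :: "'b measure \<Rightarrow> ('b \<Rightarrow> real) \<Rightarrow> real" where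
  "L2_seminorm N F = sqrt (\<integral>x. (F x)\<^sup>2 \<partial>N)"

lemma square_integrable_mult_integrable:
  assumes "square_integrable N F" "square_integrable N G"
  shows "integrable N (\<lambda>x. F x * G x)"
proof (rule Bochner_Integration.integrable_bound[where f="\<lambda>x. (F x)\<^sup>2 + (G x)\<^sup>2"])
  show "integrable N (\<lambda>x. (F x)\<^sup>2 + (G x)\<^sup>2)" using assms unfolding square_integrable_def by auto
  show "(\<lambda>x. F x * G x) \<in> borel_measurable N" using assms unfolding square_integrable_def by auto
  have "\<bar>F x * G x\<bar> \<le> (F x)\<^sup>2 + (G x)\<^sup>2" for x
  proof -
    have "2 * (\<bar>F x\<bar> * \<bar>G x\<bar>) \<le> (F x)\<^sup>2 + (G x)\<^sup>2"
      using zero_le_power2[of "\<bar>F x\<bar> - \<bar>G x\<bar>"] unfolding power2_diff by simp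
    then show ?thesis
      unfolding abs_mult using mult_nonneg_nonneg[OF abs_ge_zero abs_ge_zero, of "F x" "G x"] by linarith
  qed
  then show "AE x in N. norm (F x * G x) \<le> norm ((F x)\<^sup>2 + (G x)\<^sup>2)" by simp
qed

lemma square_integrable_add:
  assumes "square_integrable N F" "square_integrable N G"
  shows "square_integrable N (\<lambda>x. F x + G x)"
proof -
  have "integrable N (\<lambda>x. (F x)\<^sup>2 + 2 * (F x * G x) + (G x)\<^sup>2)"
    using assms square_integrable_mult_integrable[OF assms] unfolding square_integrable_def by auto
  moreover have "(\<lambda>x. (F x + G x)\<^sup>2) = (\<lambda>x. (F x)\<^sup>2 + 2 * (F x * G x) + (G x)\<^sup>2)"
    by (simp add: power2_sum fun_eq_iff)
  ultimately show ?thesis using assms unfolding square_integrable_def by auto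
qed

lemma square_integrable_cmult:
  "square_integrable N F \<Longrightarrow> square_integrable N (\<lambda>x. c * F x)"
  unfolding square_integrable_def by (auto simp: power_mult_distrib)

lemma square_integrable_Cauchy_Schwarz:
  assumes "square_integrable N F" "square_integrable N G"
  shows "(\<integral>x. F x * G x \<partial>N)\<^sup>2 \<le> (\<integral>x. (F x)\<^sup>2 \<partial>N) * (\<integral>x. (G x)\<^sup>2 \<partial>N)"
proof -
  define a where "a = (\<integral>x. (F x)\<^sup>2 \<partial>N)"
  define b where "b = (\<integral>x. F x * G x \<partial>N)"
  define c where "c = (\<integral>x. (G x)\<^sup>2 \<partial>N)"
  have iF: "integrable N (\<lambda>x. (F x)\<^sup>2)" and iG: "integrable N (\<lambda>x. (G x)\<^sup>2)"
    using assms unfolding square_integrable_def by auto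
  note iFG = square_integrable_mult_integrable[OF assms]
  have q: "0 \<le> a + 2 * t * b + t\<^sup>2 * c" for t
  proof -
    have "0 \<le> (\<integral>x. (F x + t * G x)\<^sup>2 \<partial>N)" by simp
    also have "\<dots> = (\<integral>x. (F x)\<^sup>2 + (2 * t) * (F x * G x) + t\<^sup>2 * (G x)\<^sup>2 \<partial>N)"
      by (simp add: power2_sum power_mult_distrib algebra_simps)
    also have "\<dots> = a + 2 * t * b + t\<^sup>2 * c"
      using iF iG iFG unfolding a_def b_def c_def by simp
    finally show ?thesis .
  qed
  have "b\<^sup>2 \<le> a * c"
  proof (cases "c = 0")
    case True
    then have "b = 0"
      using q[of "- (a + 1) / (2 * b)"] by (cases "b = 0") (auto simp: field_simps)
    then show ?thesis using True by simp
  next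
    case False
    then have "c > 0" unfolding c_def by (simp add: order_le_neq_trans)
    then show ?thesis
      using q[of "- b / c"] by (simp add: field_simps power2_eq_square)
  qed
  then show ?thesis unfolding a_def b_def c_def .
qed

lemma L2_seminorm_triangle:
  assumes "square_integrable N F" "square_integrable N G"
  shows "L2_seminorm N (\<lambda>x. F x + G x) \<le> L2_seminorm N F + L2_seminorm N G"
proof -
  define a where "a = (\<integral>x. (F x)\<^sup>2 \<partial>N)"
  define b where "b = (\<integral>x. F x * G x \<partial>N)"
  define c where "c = (\<integral>x. (G x)\<^sup>2 \<partial>N)"
  have iF: "integrable N (\<lambda>x. (F x)\<^sup>2)" and iG: "integrable N (\<lambda>x. (G x)\<^sup>2)"
    using assms unfolding square_integrable_def by auto
  note iFG = square_integrable_mult_integrable[OF assms]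
  have a0: "0 \<le> a" and c0: "0 \<le> c" unfolding a_def c_def by auto
  have "(\<integral>x. (F x + G x)\<^sup>2 \<partial>N) = (\<integral>x. (F x)\<^sup>2 + 2 * (F x * G x) + (G x)\<^sup>2 \<partial>N)"
    by (intro Bochner_Integration.integral_cong refl) (simp add: power2_sum)
  also have "\<dots> = a + 2 * b + c" using iF iG iFG unfolding a_def b_def c_def by simp
  finally have sq: "(\<integral>x. (F x + G x)\<^sup>2 \<partial>N) = a + 2 * b + c" .
  have "\<bar>b\<bar> \<le> sqrt (a * c)"
    using square_integrable_Cauchy_Schwarz[OF assms] unfolding a_def b_def c_def
    by (intro real_le_rsqrt) simp
  then have "a + 2 * b + c \<le> (sqrt a + sqrt c)\<^sup>2"
    using a0 c0 by (simp add: power2_sum real_sqrt_mult)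
  then show ?thesis
    unfolding L2_seminorm_def sq a_def[symmetric] c_def[symmetric]
    using a0 c0 by (simp add: real_le_lsqrt)
qed

definition restrict01 :: "(real \<Rightarrow> real) \<Rightarrow> real \<Rightarrow> real" where
  "restrict01 f t = indicator {0..1} t * f t"

lemma power2_restrict01: "(\<lambda>t. (restrict01 f t)\<^sup>2) = (\<lambda>t. indicator {0..1} t *\<^sub>R (f t)\<^sup>2)"
  by (auto simp: restrict01_def indicator_def fun_eq_iff)

lemma L2_01_iff_square_integrable: "f \<in> L2_01 \<longleftrightarrow> square_integrable lborel (restrict01 f)"
  unfolding L2_01_def square_integrable_def set_borel_measurable_def set_integrable_def
    power2_restrict01 by (simp add: restrict01_def[abs_def])

lemma L2norm01_eq_L2_seminorm: "L2norm01 f = L2_seminorm lborel (restrict01 f)"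
  unfolding L2norm01_def L2_seminorm_def set_lebesgue_integral_def power2_restrict01 ..

lemma L2_01_add: "f \<in> L2_01 \<Longrightarrow> g \<in> L2_01 \<Longrightarrow> (\<lambda>t. f t + g t) \<in> L2_01"
  using square_integrable_add
  unfolding L2_01_iff_square_integrable restrict01_def distrib_left by blast

lemma L2_01_cmult: "f \<in> L2_01 \<Longrightarrow> (\<lambda>t. c * f t) \<in> L2_01"
  using square_integrable_cmult[of lborel "restrict01 f" c]
  unfolding L2_01_iff_square_integrable restrict01_def by (simp add: mult.left_commute)

lemma L2_01_diff: "f \<in> L2_01 \<Longrightarrow> g \<in> L2_01 \<Longrightarrow> (\<lambda>t. f t - g t) \<in> L2_01"
  using L2_01_add[of f "\<lambda>t. (-1) * g t"] L2_01_cmult[of g "-1"] by simp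

lemma L2norm01_nonneg: "0 \<le> L2norm01 f"
  unfolding L2norm01_eq_L2_seminorm L2_seminorm_def by simp

lemma L2norm01_power2: "(L2norm01 f)\<^sup>2 = (LINT t:{0..1}|lborel. (f t)\<^sup>2)"
  unfolding L2norm01_def set_lebesgue_integral_def
  by (simp add: Bochner_Integration.integral_nonneg indicator_def)

lemma L2norm01_commute: "L2norm01 (\<lambda>t. f t - g t) = L2norm01 (\<lambda>t. g t - f t)"
  unfolding L2norm01_def by (simp add: power2_commute)

lemma L2norm01_add_le:
  "f \<in> L2_01 \<Longrightarrow> g \<in> L2_01 \<Longrightarrow> L2norm01 (\<lambda>t. f t + g t) \<le> L2norm01 f + L2norm01 g"
  using L2_seminorm_triangle
  unfolding L2norm01_eq_L2_seminorm L2_01_iff_square_integrable restrict01_def distrib_left by blast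

lemma L2norm01_diff_le:
  assumes "f \<in> L2_01" "g \<in> L2_01"
  shows "L2norm01 (\<lambda>t. f t - g t) \<le> L2norm01 f + L2norm01 g"
proof -
  have "L2norm01 (\<lambda>t. (-1) * g t) = L2norm01 g" unfolding L2norm01_def by simp
  then show ?thesis using L2norm01_add_le[OF assms(1) L2_01_cmult[OF assms(2), of "-1"]] by simp
qed

lemma L2norm01_diff_diff_le:
  assumes "p \<in> L2_01" "q \<in> L2_01" "r \<in> L2_01" "s \<in> L2_01"
  shows "\<bar>L2norm01 (\<lambda>t. p t - q t) - L2norm01 (\<lambda>t. r t - s t)\<bar>
           \<le> L2norm01 (\<lambda>t. p t - r t) + L2norm01 (\<lambda>t. q t - s t)"
proof -
  have L2: "(\<lambda>t. p t - q t) \<in> L2_01" "(\<lambda>t. r t - s t) \<in> L2_01"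
    "(\<lambda>t. p t - r t) \<in> L2_01" "(\<lambda>t. q t - s t) \<in> L2_01"
    using L2_01_diff assms by auto
  have "L2norm01 (\<lambda>t. p t - q t) \<le> L2norm01 (\<lambda>t. r t - s t) + L2norm01 (\<lambda>t. (p t - r t) - (q t - s t))"
    using L2norm01_add_le[OF L2(2) L2_01_diff[OF L2(3,4)]] by (simp add: algebra_simps)
  moreover have "L2norm01 (\<lambda>t. r t - s t) \<le> L2norm01 (\<lambda>t. p t - q t) + L2norm01 (\<lambda>t. (q t - s t) - (p t - r t))"
    using L2norm01_add_le[OF L2(1) L2_01_diff[OF L2(4,3)]] by (simp add: algebra_simps)
  ultimately show ?thesis
    using L2norm01_diff_le[OF L2(3,4)] L2norm01_diff_le[OF L2(4,3)] by linarith
qed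

lemma L2norm01_diff_tendsto:
  assumes "g \<in> L2_01" "h \<in> L2_01" "\<And>j. p j \<in> L2_01" "\<And>j. q j \<in> L2_01"
    and "(\<lambda>j. L2norm01 (\<lambda>t. g t - p j t)) \<longlonglongrightarrow> 0"
    and "(\<lambda>j. L2norm01 (\<lambda>t. h t - q j t)) \<longlonglongrightarrow> 0"
  shows "(\<lambda>j. L2norm01 (\<lambda>t. p j t - q j t)) \<longlonglongrightarrow> L2norm01 (\<lambda>t. g t - h t)"
proof -
  have "(\<lambda>j. L2norm01 (\<lambda>t. p j t - q j t) - L2norm01 (\<lambda>t. g t - h t)) \<longlonglongrightarrow> 0"
  proof (rule Lim_null_comparison)
    show "\<forall>\<^sub>F j in sequentially. norm (L2norm01 (\<lambda>t. p j t - q j t) - L2norm01 (\<lambda>t. g t - h t))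
        \<le> L2norm01 (\<lambda>t. g t - p j t) + L2norm01 (\<lambda>t. h t - q j t)"
      using L2norm01_diff_diff_le[OF assms(3,4) assms(1,2)]
      by (simp add: L2norm01_commute[of "p _" g] L2norm01_commute[of "q _" h])
    show "(\<lambda>j. L2norm01 (\<lambda>t. g t - p j t) + L2norm01 (\<lambda>t. h t - q j t)) \<longlonglongrightarrow> 0"
      using tendsto_add[OF assms(5,6)] by simp
  qed
  then show ?thesis by (simp add: LIM_zero_iff)
qed

lemma indicator01_mult_step_fun_power2:
  assumes "partition01 m u"
  shows "indicator {0..1} s * (step_fun m u e s)\<^sup>2 = (\<Sum>p<m. (e p)\<^sup>2 * indicator {u p..<u (Suc p)} s)"
proof (cases "s < 0 \<or> 1 \<le> s")
  case True
  have "(\<Sum>p<m. (e p)\<^sup>2 * indicator {u p..<u (Suc p)} s) = 0"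
  proof (intro sum.neutral ballI)
    fix p assume "p \<in> {..<m}"
    then show "(e p)\<^sup>2 * indicator {u p..<u (Suc p)} s = 0"
      using partition01_bounds[OF assms, of p] partition01_bounds[OF assms, of "Suc p"] True
      by (auto simp: indicator_def)
  qed
  then show ?thesis using step_fun_outside[OF assms True] by simp
next
  case False
  then have "0 \<le> s" "s < 1" by auto
  then obtain k where k: "k < m" "u k \<le> s" "s < u (Suc k)" by (rule partition01_cell[OF assms])
  then show ?thesis
    using step_fun_on_cell[OF assms k, of e] step_fun_on_cell[OF assms k, of "\<lambda>p. (e p)\<^sup>2"] False
    by (simp add: step_fun_def)
qed

lemma integrable_step_fun_power2:
  fixes e u :: "nat \<Rightarrow> real"
  shows "integrable lborel (\<lambda>s. \<Sum>p<m. (e p)\<^sup>2 * indicator {u p..<u (Suc p)} s :: real)"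
  by (intro Bochner_Integration.integrable_sum integrable_mult_right integrable_real_indicator
      emeasure_bounded_finite) simp_all

lemma step_fun_in_L2_01:
  assumes "partition01 m u"
  shows "step_fun m u e \<in> L2_01"
proof -
  have "(\<lambda>s. indicator {0..1} s *\<^sub>R (step_fun m u e s)\<^sup>2) = (\<lambda>s. \<Sum>p<m. (e p)\<^sup>2 * indicator {u p..<u (Suc p)} s)"
    using indicator01_mult_step_fun_power2[OF assms] by auto
  moreover have "step_fun m u e \<in> borel_measurable lborel"
    unfolding step_fun_def by measurable
  ultimately show ?thesis
    using integrable_step_fun_power2
    unfolding L2_01_def set_borel_measurable_def set_integrable_def by simp
qed

lemma L2norm01_step_fun_power2:
  assumes "partition01 m u"
  shows "(L2norm01 (step_fun m u e))\<^sup>2 = (\<Sum>p<m. (e p)\<^sup>2 * (u (Suc p) - u p))"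
proof -
  have "(L2norm01 (step_fun m u e))\<^sup>2 = (\<integral>s. (\<Sum>p<m. (e p)\<^sup>2 * indicator {u p..<u (Suc p)} s) \<partial>lborel)"
    unfolding L2norm01_power2 set_lebesgue_integral_def
    using indicator01_mult_step_fun_power2[OF assms] by simp
  also have "\<dots> = (\<Sum>p<m. (\<integral>s. (e p)\<^sup>2 * indicator {u p..<u (Suc p)} s \<partial>lborel))"
    by (intro Bochner_Integration.integral_sum integrable_mult_right integrable_real_indicator
        emeasure_bounded_finite) simp_all
  also have "\<dots> = (\<Sum>p<m. (e p)\<^sup>2 * (u (Suc p) - u p))"
    using assms unfolding partition01_def by (intro sum.cong refl) (auto simp: less_imp_le)
  finally show ?thesis .
qed

lemma normal_density_mult_exp_power2:
  fixes s \<mu> x :: real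
  assumes "s > 0" "2 * \<mu> * s\<^sup>2 < 1"
  shows "normal_density 0 s x * exp (\<mu> * x\<^sup>2)
       = (1 / sqrt (1 - 2 * \<mu> * s\<^sup>2)) * normal_density 0 (s / sqrt (1 - 2 * \<mu> * s\<^sup>2)) x"
proof -
  define a where "a = 1 - 2 * \<mu> * s\<^sup>2"
  have a: "a > 0" using assms a_def by simp
  have "normal_density 0 s x * exp (\<mu> * x\<^sup>2) = 1 / sqrt (2 * pi * s\<^sup>2) * exp (- x\<^sup>2 / (2 * s\<^sup>2) + \<mu> * x\<^sup>2)"
    unfolding normal_density_def by (simp add: mult_exp_exp)
  also have "- x\<^sup>2 / (2 * s\<^sup>2) + \<mu> * x\<^sup>2 = - x\<^sup>2 / (2 * (s / sqrt a)\<^sup>2)"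
    using assms a unfolding a_def by (simp add: field_simps power_divide)
  also have "1 / sqrt (2 * pi * s\<^sup>2) = (1 / sqrt a) * (1 / sqrt (2 * pi * (s / sqrt a)\<^sup>2))"
    using assms a by (simp add: real_sqrt_divide real_sqrt_mult power_divide field_simps)
  finally show ?thesis unfolding normal_density_def a_def[symmetric] by simp
qed

lemma nn_integral_normal_density_exp_power2:
  fixes s \<mu> :: real
  assumes "s > 0" "2 * \<mu> * s\<^sup>2 < 1"
  shows "(\<integral>\<^sup>+x. ennreal (normal_density 0 s x) * ennreal (exp (\<mu> * x\<^sup>2)) \<partial>lborel)
       = ennreal (1 / sqrt (1 - 2 * \<mu> * s\<^sup>2))"
proof -
  define c where "c = 1 / sqrt (1 - 2 * \<mu> * s\<^sup>2)"
  define s' where "s' = s / sqrt (1 - 2 * \<mu> * s\<^sup>2)"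
  have c: "c \<ge> 0" and s': "s' > 0" unfolding c_def s'_def using assms by simp_all
  have "(\<integral>\<^sup>+x. ennreal (normal_density 0 s x) * ennreal (exp (\<mu> * x\<^sup>2)) \<partial>lborel)
      = (\<integral>\<^sup>+x. ennreal c * ennreal (normal_density 0 s' x) \<partial>lborel)"
    using normal_density_mult_exp_power2[OF assms] c
    by (intro nn_integral_cong) (simp add: ennreal_mult'[symmetric] c_def s'_def)
  also have "\<dots> = ennreal c * (\<integral>\<^sup>+x. ennreal (normal_density 0 s' x) \<partial>lborel)"
    by (rule nn_integral_cmult) simp
  also have "(\<integral>\<^sup>+x. ennreal (normal_density 0 s' x) \<partial>lborel) = 1"
    using integrable_normal_density[OF s'] integral_normal_density[OF s']
    by (subst nn_integral_eq_integral) auto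
  finally show ?thesis unfolding c_def by simp
qed

lemma wiener_process01_increment_distributed:
  assumes "wiener_process01 M W" "partition01 m u" "p < m"
  shows "distributed M lborel (\<lambda>\<omega>. W (u (Suc p)) \<omega> - W (u p) \<omega>)
           (\<lambda>x. ennreal (normal_density 0 (sqrt (u (Suc p) - u p)) x))"
  using assms partition01_bounds[OF assms(2), of p] partition01_bounds[OF assms(2), of "Suc p"]
  unfolding wiener_process01_def partition01_def by auto

lemma wiener_process01_indep_increments:
  assumes "wiener_process01 M W" "partition01 m u"
  shows "prob_space.indep_vars M (\<lambda>_. borel) (\<lambda>k \<omega>. W (u (Suc k)) \<omega> - W (u k) \<omega>) {..<m}"
proof -
  have "\<forall>k<m. 0 \<le> u k \<and> u k < u (Suc k) \<and> u (Suc k) \<le> 1"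
    using partition01_bounds[OF assms(2)] assms(2) unfolding partition01_def by (auto simp: Suc_le_eq)
  then show ?thesis using assms(1) unfolding wiener_process01_def by blast
qed

lemma step_ito_measurable:
  assumes "\<And>t. t \<in> {0..1} \<Longrightarrow> W t \<in> borel_measurable N" "partition01 n ts"
  shows "step_ito W n ts cs \<in> borel_measurable N"
  unfolding step_ito_def[abs_def]
  using assms partition01_bounds[OF assms(2)] by (intro borel_measurable_sum) (auto simp: Suc_leI)

text \<open>With the coordinate process \<open>\<lambda>t x. x t\<close>, \<open>step_ito\<close> becomes a functional of a path
  \<open>x \<in> {0..1} \<rightarrow> \<real>\<close>; step integrals of \<open>W\<close> are this functional applied to the restricted sample path,
  the random variable whose independence across coordinates is assumed.\<close>

lemma step_ito_path_measurable:
  "partition01 n ts \<Longrightarrow> step_ito (\<lambda>t x. x t) n ts cs \<in> borel_measurable (PiM {0..1} (\<lambda>_. borel))"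
  by (rule step_ito_measurable) (auto intro: measurable_component_singleton)

lemma step_ito_eq_path:
  assumes "partition01 n ts"
  shows "step_ito W n ts cs \<omega> = step_ito (\<lambda>t x. x t) n ts cs (\<lambda>t\<in>{0..1}. W t \<omega>)"
  unfolding step_ito_def
  using partition01_bounds[OF assms] by (intro sum.cong refl) (auto simp: Suc_leI)

lemma (in prob_space) step_ito_distributed_normal:
  assumes W: "wiener_process01 M W" and pu: "partition01 m u"
    and pos: "0 < L2norm01 (step_fun m u e)"
  shows "distributed M lborel (step_ito W m u e) (\<lambda>x. ennreal (normal_density 0 (L2norm01 (step_fun m u e)) x))"
proof -
  define I where "I = {p. p < m \<and> e p \<noteq> 0}"
  define X where "X p \<omega> = e p * (W (u (Suc p)) \<omega> - W (u p) \<omega>)" for p \<omega>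
  define \<sigma> where "\<sigma> p = \<bar>e p\<bar> * sqrt (u (Suc p) - u p)" for p
  have dpos: "u (Suc p) - u p > 0" if "p < m" for p using pu that unfolding partition01_def by auto
  have var: "(L2norm01 (step_fun m u e))\<^sup>2 = (\<Sum>p\<in>I. (\<sigma> p)\<^sup>2)"
    unfolding L2norm01_step_fun_power2[OF pu] \<sigma>_def
    by (rule sum.mono_neutral_cong_right) (auto simp: I_def power_mult_distrib dest!: dpos)
  have I: "I \<noteq> {}"
  proof
    assume "I = {}"
    then show False using pos var by simp
  qed
  have indep: "indep_vars (\<lambda>_. borel) X I"
    using indep_vars_compose2[OF wiener_process01_indep_increments[OF W pu], of "\<lambda>k y. e k * y"]
    unfolding X_def by (rule indep_vars_subset) (auto simp: I_def)
  have \<sigma>: "0 < \<sigma> p" if "p \<in> I" for p using dpos that unfolding I_def \<sigma>_def by auto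
  have X: "distributed M lborel (X p) (normal_density 0 (\<sigma> p))" if "p \<in> I" for p
    using normal_density_affine[OF wiener_process01_increment_distributed[OF W pu], of p "e p" 0]
      dpos that unfolding I_def X_def \<sigma>_def by auto
  have "distributed M lborel (\<lambda>\<omega>. \<Sum>p\<in>I. X p \<omega>) (normal_density (\<Sum>p\<in>I. 0) (sqrt (\<Sum>p\<in>I. (\<sigma> p)\<^sup>2)))"
    by (rule sum_indep_normal[OF _ I indep \<sigma> X]) (simp add: I_def)
  moreover have "(\<lambda>\<omega>. \<Sum>p\<in>I. X p \<omega>) = step_ito W m u e"
    unfolding X_def step_ito_def by (intro ext sum.mono_neutral_left) (auto simp: I_def)
  ultimately show ?thesis
    unfolding var[symmetric] by (simp add: L2norm01_nonneg)
qed

lemma (in prob_space) nn_integral_exp_step_ito_power2: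
  assumes W: "wiener_process01 M W" and pu: "partition01 m u"
    and \<mu>: "2 * \<mu> * (L2norm01 (step_fun m u e))\<^sup>2 < 1"
  shows "(\<integral>\<^sup>+\<omega>. ennreal (exp (\<mu> * (step_ito W m u e \<omega>)\<^sup>2)) \<partial>M)
       = ennreal (1 / sqrt (1 - 2 * \<mu> * (L2norm01 (step_fun m u e))\<^sup>2))"
proof (cases "L2norm01 (step_fun m u e) = 0")
  case True
  have dpos: "u (Suc p) - u p > 0" if "p < m" for p using pu that unfolding partition01_def by auto
  then have nn: "\<And>p. p \<in> {..<m} \<Longrightarrow> 0 \<le> (e p)\<^sup>2 * (u (Suc p) - u p)" by (simp add: less_imp_le)
  have "(\<Sum>p<m. (e p)\<^sup>2 * (u (Suc p) - u p)) = 0"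
    using L2norm01_step_fun_power2[OF pu, of e] True by simp
  then have "e p = 0" if "p < m" for p
    using sum_nonneg_eq_0_iff[of "{..<m}", OF _ nn] dpos[OF that] that by (simp; force)
  then have "step_ito W m u e \<omega> = 0" for \<omega> unfolding step_ito_def by simp
  then show ?thesis using True by (simp add: emeasure_space_1)
next
  case False
  then have "0 < L2norm01 (step_fun m u e)" using L2norm01_nonneg order_le_neq_trans by metis
  with \<mu> show ?thesis
    by (subst distributed_nn_integral[OF step_ito_distributed_normal[OF W pu], symmetric])
       (simp_all add: nn_integral_normal_density_exp_power2)
qed

lemma (in prob_space) nn_integral_exp_step_ito_diff_power2:
  assumes W: "wiener_process01 M W" and p: "partition01 n1 ts1" "partition01 n2 ts2"
    and \<mu>: "2 * \<mu> * (L2norm01 (\<lambda>s. step_fun n1 ts1 c1 s - step_fun n2 ts2 c2 s))\<^sup>2 < 1"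
  shows "(\<integral>\<^sup>+\<omega>. ennreal (exp (\<mu> * (step_ito W n1 ts1 c1 \<omega> - step_ito W n2 ts2 c2 \<omega>)\<^sup>2)) \<partial>M)
       = ennreal (1 / sqrt (1 - 2 * \<mu> * (L2norm01 (\<lambda>s. step_fun n1 ts1 c1 s - step_fun n2 ts2 c2 s))\<^sup>2))"
proof -
  obtain m u e where pu: "partition01 m u"
    and "\<And>\<omega>. step_ito W n1 ts1 c1 \<omega> - step_ito W n2 ts2 c2 \<omega> = step_ito W m u e \<omega>"
    and "(\<lambda>s. step_fun n1 ts1 c1 s - step_fun n2 ts2 c2 s) = step_fun m u e"
    using step_diff_common_partition[OF p] by metis
  then show ?thesis using nn_integral_exp_step_ito_power2[OF W pu] \<mu> by simp
qed

lemma integral_power2_diff_diff_tendsto: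
  fixes a b :: "'a \<Rightarrow> real" and s t :: "nat \<Rightarrow> 'a \<Rightarrow> real"
  assumes [measurable]: "a \<in> borel_measurable M" "b \<in> borel_measurable M"
    "\<And>j. s j \<in> borel_measurable M" "\<And>j. t j \<in> borel_measurable M"
    and ia: "\<And>j. integrable M (\<lambda>\<omega>. (a \<omega> - s j \<omega>)\<^sup>2)" and ib: "\<And>j. integrable M (\<lambda>\<omega>. (b \<omega> - t j \<omega>)\<^sup>2)"
    and ca: "(\<lambda>j. \<integral>\<omega>. (a \<omega> - s j \<omega>)\<^sup>2 \<partial>M) \<longlonglongrightarrow> 0"
    and cb: "(\<lambda>j. \<integral>\<omega>. (b \<omega> - t j \<omega>)\<^sup>2 \<partial>M) \<longlonglongrightarrow> 0"
  shows "integrable M (\<lambda>\<omega>. ((a \<omega> - b \<omega>) - (s j \<omega> - t j \<omega>))\<^sup>2)"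
    and "(\<lambda>j. \<integral>\<omega>. ((a \<omega> - b \<omega>) - (s j \<omega> - t j \<omega>))\<^sup>2 \<partial>M) \<longlonglongrightarrow> 0"
proof -
  define B where "B j \<omega> = 2 * (a \<omega> - s j \<omega>)\<^sup>2 + 2 * (b \<omega> - t j \<omega>)\<^sup>2" for j \<omega>
  have bound: "((a \<omega> - b \<omega>) - (s j \<omega> - t j \<omega>))\<^sup>2 \<le> B j \<omega>" for \<omega> j
    using zero_le_power2[of "(a \<omega> - s j \<omega>) + (b \<omega> - t j \<omega>)"]
    unfolding B_def by (simp add: power2_eq_square algebra_simps)
  have B0: "0 \<le> B j \<omega>" for j \<omega> unfolding B_def by simp
  have iB: "integrable M (B j)" for j unfolding B_def[abs_def] using ia ib by auto
  have int: "integrable M (\<lambda>\<omega>. ((a \<omega> - b \<omega>) - (s j \<omega> - t j \<omega>))\<^sup>2)" for j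
  proof (rule Bochner_Integration.integrable_bound[OF iB[of j]])
    show "AE \<omega> in M. norm (((a \<omega> - b \<omega>) - (s j \<omega> - t j \<omega>))\<^sup>2) \<le> norm (B j \<omega>)"
      using bound B0 by (intro AE_I2) simp
  qed measurable
  then show "integrable M (\<lambda>\<omega>. ((a \<omega> - b \<omega>) - (s j \<omega> - t j \<omega>))\<^sup>2)" .
  have "(\<lambda>j. \<integral>\<omega>. B j \<omega> \<partial>M) = (\<lambda>j. 2 * (\<integral>\<omega>. (a \<omega> - s j \<omega>)\<^sup>2 \<partial>M) + 2 * (\<integral>\<omega>. (b \<omega> - t j \<omega>)\<^sup>2 \<partial>M))"
    unfolding B_def using ia ib by simp
  also have "\<dots> \<longlonglongrightarrow> 2 * 0 + 2 * 0" by (intro tendsto_add tendsto_mult_left ca cb)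
  finally have Blim: "(\<lambda>j. \<integral>\<omega>. B j \<omega> \<partial>M) \<longlonglongrightarrow> 0" by simp
  show "(\<lambda>j. \<integral>\<omega>. ((a \<omega> - b \<omega>) - (s j \<omega> - t j \<omega>))\<^sup>2 \<partial>M) \<longlonglongrightarrow> 0"
  proof (rule tendsto_sandwich[OF _ _ tendsto_const Blim])
    show "\<forall>\<^sub>F j in sequentially. (\<integral>\<omega>. ((a \<omega> - b \<omega>) - (s j \<omega> - t j \<omega>))\<^sup>2 \<partial>M) \<le> (\<integral>\<omega>. B j \<omega> \<partial>M)"
      using int iB bound by (intro always_eventually allI integral_mono) auto
  qed simp
qed

lemma tendsto_zero_of_sum_power2:
  fixes a :: "'i \<Rightarrow> nat \<Rightarrow> real"
  assumes "finite I" "i \<in> I" "(\<lambda>j. \<Sum>k\<in>I. (a k j)\<^sup>2) \<longlonglongrightarrow> 0"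
  shows "(\<lambda>j. a i j) \<longlonglongrightarrow> 0"
proof (rule Lim_null_comparison)
  have "(a i j)\<^sup>2 \<le> (\<Sum>k\<in>I. (a k j)\<^sup>2)" for j
    using assms(1,2) by (intro member_le_sum) auto
  then show "\<forall>\<^sub>F j in sequentially. norm (a i j) \<le> sqrt (\<Sum>k\<in>I. (a k j)\<^sup>2)"
    by (intro always_eventually allI) (simp add: real_le_rsqrt)
  show "(\<lambda>j. sqrt (\<Sum>k\<in>I. (a k j)\<^sup>2)) \<longlonglongrightarrow> 0"
    using tendsto_real_sqrt[OF assms(3)] by simp
qed

lemma L2_tendsto_imp_AE_subseq:
  fixes Y :: "'i \<Rightarrow> 'a \<Rightarrow> real" and S :: "'i \<Rightarrow> nat \<Rightarrow> 'a \<Rightarrow> real"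
  assumes I: "finite I"
    and int: "\<And>i j. i \<in> I \<Longrightarrow> integrable M (\<lambda>\<omega>. (Y i \<omega> - S i j \<omega>)\<^sup>2)"
    and lim: "\<And>i. i \<in> I \<Longrightarrow> (\<lambda>j. \<integral>\<omega>. (Y i \<omega> - S i j \<omega>)\<^sup>2 \<partial>M) \<longlonglongrightarrow> 0"
  obtains r where "strict_mono r" "AE \<omega> in M. \<forall>i\<in>I. (\<lambda>j. S i (r j) \<omega>) \<longlonglongrightarrow> Y i \<omega>"
proof -
  define U where "U j \<omega> = (\<Sum>i\<in>I. (Y i \<omega> - S i j \<omega>)\<^sup>2)" for j \<omega>
  have U: "integrable M (U j)" for j unfolding U_def[abs_def] using int by auto
  have "(\<lambda>j. \<integral>\<omega>. norm (U j \<omega>) \<partial>M) = (\<lambda>j. \<Sum>i\<in>I. \<integral>\<omega>. (Y i \<omega> - S i j \<omega>)\<^sup>2 \<partial>M)"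
    unfolding U_def using int by (simp add: sum_nonneg Bochner_Integration.integral_sum)
  also have "\<dots> \<longlonglongrightarrow> (\<Sum>i\<in>I. 0)" using lim by (intro tendsto_sum) auto
  finally have "(\<lambda>j. \<integral>\<omega>. norm (U j \<omega>) \<partial>M) \<longlonglongrightarrow> 0" by simp
  then obtain r where r: "strict_mono r" and AE: "AE \<omega> in M. (\<lambda>j. U (r j) \<omega>) \<longlonglongrightarrow> 0"
    using tendsto_L1_AE_subseq[of M U] U by blast
  from AE have "AE \<omega> in M. \<forall>i\<in>I. (\<lambda>j. S i (r j) \<omega>) \<longlonglongrightarrow> Y i \<omega>"
  proof eventually_elim
    case (elim \<omega>)
    show ?case
    proof
      fix i assume "i \<in> I"
      then have "(\<lambda>j. Y i \<omega> - S i (r j) \<omega>) \<longlonglongrightarrow> 0"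
        using elim tendsto_zero_of_sum_power2[OF I, of i "\<lambda>k j. Y k \<omega> - S k (r j) \<omega>"] by (simp add: U_def)
      from tendsto_diff[OF tendsto_const[of "Y i \<omega>"] this] show "(\<lambda>j. S i (r j) \<omega>) \<longlonglongrightarrow> Y i \<omega>" by simp
    qed
  qed
  with r show ?thesis by (rule that)
qed

lemma nn_integral_le_of_AE_tendsto:
  fixes G :: "nat \<Rightarrow> 'a \<Rightarrow> ennreal"
  assumes "\<And>j. G j \<in> borel_measurable M"
    and "AE \<omega> in M. (\<lambda>j. G j \<omega>) \<longlonglongrightarrow> H \<omega>"
    and "(\<lambda>j. \<integral>\<^sup>+\<omega>. G j \<omega> \<partial>M) \<longlonglongrightarrow> L"
  shows "(\<integral>\<^sup>+\<omega>. H \<omega> \<partial>M) \<le> L"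
proof -
  have "(\<integral>\<^sup>+\<omega>. H \<omega> \<partial>M) = (\<integral>\<^sup>+\<omega>. liminf (\<lambda>j. G j \<omega>) \<partial>M)"
    using assms(2) by (intro nn_integral_cong_AE) (auto elim!: eventually_mono simp: lim_imp_Liminf)
  also have "\<dots> \<le> liminf (\<lambda>j. \<integral>\<^sup>+\<omega>. G j \<omega> \<partial>M)"
    by (rule nn_integral_liminf[OF assms(1)])
  also have "\<dots> = L"
    using assms(3) by (intro lim_imp_Liminf) auto
  finally show ?thesis .
qed

lemma (in prob_space) Chernoff_bound:
  assumes Z: "Z \<in> borel_measurable M"
    and mgf: "(\<integral>\<^sup>+\<omega>. ennreal (exp (\<mu> * Z \<omega>)) \<partial>M) \<le> ennreal B"
  shows "prob {\<omega>\<in>space M. a \<le> \<mu> * Z \<omega>} \<le> B * exp (- a)"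
proof -
  have "(\<integral>\<^sup>+\<omega>. ennreal (exp (\<mu> * Z \<omega>)) \<partial>M) \<noteq> 0"
    using Z by (subst nn_integral_0_iff_AE) (auto simp: AE_False)
  then have B: "0 \<le> B" using mgf by (metis ennreal_eq_0_iff le_zero_eq nle_le)
  have "a \<le> \<mu> * Z \<omega> \<longleftrightarrow> 1 \<le> ennreal (exp (- a)) * ennreal (exp (\<mu> * Z \<omega>))" for \<omega>
    by (simp add: ennreal_mult'[symmetric] mult_exp_exp del: ennreal_mult')
  then have "emeasure M {\<omega>\<in>space M. a \<le> \<mu> * Z \<omega>}
      \<le> ennreal (exp (- a)) * (\<integral>\<^sup>+\<omega>. ennreal (exp (\<mu> * Z \<omega>)) * indicator (space M) \<omega> \<partial>M)"
    using Z by (simp only:) (intro nn_integral_Markov_inequality, auto)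
  also have "(\<integral>\<^sup>+\<omega>. ennreal (exp (\<mu> * Z \<omega>)) * indicator (space M) \<omega> \<partial>M) = (\<integral>\<^sup>+\<omega>. ennreal (exp (\<mu> * Z \<omega>)) \<partial>M)"
    by (intro nn_integral_cong) simp
  also have "ennreal (exp (- a)) * \<dots> \<le> ennreal (exp (- a)) * ennreal B"
    using mgf by (intro mult_left_mono) auto
  finally show ?thesis
    using B by (simp add: emeasure_eq_measure ennreal_mult'[symmetric] mult.commute)
qed

lemma (in prob_space) prob_greater_le_of_greater:
  fixes Z :: "'a \<Rightarrow> real" and a p :: real
  assumes Z: "Z \<in> borel_measurable M"
    and le: "\<And>c. a < c \<Longrightarrow> prob {\<omega>\<in>space M. c < Z \<omega>} \<le> p"
  shows "prob {\<omega>\<in>space M. a < Z \<omega>} \<le> p"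
proof -
  define E where "E n = {\<omega>\<in>space M. a + 1 / real (Suc n) < Z \<omega>}" for n
  have E: "range E \<subseteq> sets M" unfolding E_def using Z by auto
  have "1 / real (Suc (Suc n)) \<le> 1 / real (Suc n)" for n by (simp add: frac_le)
  then have "incseq E" unfolding E_def
    by (intro incseq_SucI subsetI) (simp, meson add_left_mono le_less_trans)
  moreover have "(\<Union>n. E n) = {\<omega>\<in>space M. a < Z \<omega>}"
  proof (intro equalityI subsetI)
    fix \<omega> assume "\<omega> \<in> {\<omega>\<in>space M. a < Z \<omega>}"
    then obtain n where "\<omega> \<in> space M" "inverse (real (Suc n)) < Z \<omega> - a"
      using reals_Archimedean[of "Z \<omega> - a"] by auto
    then show "\<omega> \<in> (\<Union>n. E n)" unfolding E_def by (auto simp: field_simps)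
  qed (auto simp: E_def intro: less_trans[rotated])
  ultimately have "(\<lambda>n. prob (E n)) \<longlonglongrightarrow> prob {\<omega>\<in>space M. a < Z \<omega>}"
    using finite_Lim_measure_incseq[OF E] by simp
  then show ?thesis
  proof (rule LIMSEQ_le_const2)
    show "\<exists>N. \<forall>n\<ge>N. prob (E n) \<le> p"
      unfolding E_def by (intro exI[of _ 0] allI impI le) simp
  qed
qed

definition step_approximation ::
  "'a measure \<Rightarrow> (real \<Rightarrow> 'a \<Rightarrow> real) \<Rightarrow> (real \<Rightarrow> real) \<Rightarrow> ('a \<Rightarrow> real) \<Rightarrow>
    (nat \<Rightarrow> nat) \<Rightarrow> (nat \<Rightarrow> nat \<Rightarrow> real) \<Rightarrow> (nat \<Rightarrow> nat \<Rightarrow> real) \<Rightarrow> bool" where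
  "step_approximation M W f X n ts cs \<longleftrightarrow>
     (\<forall>j. partition01 (n j) (ts j)) \<and>
     ((\<lambda>j. L2norm01 (\<lambda>s. f s - step_fun (n j) (ts j) (cs j) s)) \<longlonglongrightarrow> 0) \<and>
     (\<forall>j. integrable M (\<lambda>\<omega>. (X \<omega> - step_ito W (n j) (ts j) (cs j) \<omega>)\<^sup>2)) \<and>
     ((\<lambda>j. \<integral>\<omega>. (X \<omega> - step_ito W (n j) (ts j) (cs j) \<omega>)\<^sup>2 \<partial>M) \<longlonglongrightarrow> 0)"

lemma is_ito_integral_iff:
  "is_ito_integral M W f X \<longleftrightarrow> X \<in> borel_measurable M \<and> (\<exists>n ts cs. step_approximation M W f X n ts cs)"
  unfolding is_ito_integral_def step_approximation_def ..

lemma inverse_sqrt_inverse_power: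
  fixes x :: real
  assumes "0 < x"
  shows "(1 / sqrt (1 / x)) ^ d = exp (real d / 2 * ln x)"
proof -
  have "1 / sqrt (1 / x) = exp (ln x / 2)"
    using assms by (simp add: real_sqrt_divide powr_half_sqrt[symmetric] powr_def)
  then show ?thesis by (simp add: exp_of_nat_mult[symmetric])
qed

lemma le_mult_sqrt_divide_of_power2_le:
  fixes x \<delta> p q c :: real
  assumes "0 < c" "0 < q" "0 \<le> \<delta>" "c * q * x\<^sup>2 \<le> c * p * \<delta>\<^sup>2"
  shows "x \<le> \<delta> * sqrt (p / q)"
proof -
  have "x\<^sup>2 \<le> (p / q) * \<delta>\<^sup>2" using assms by (simp add: field_simps)
  then have "x \<le> sqrt ((p / q) * \<delta>\<^sup>2)" by (rule real_le_rsqrt)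
  also have "\<dots> = \<delta> * sqrt (p / q)" using assms(3) by (subst real_sqrt_mult) simp
  finally show ?thesis .
qed

locale wiener_sensing = prob_space M for M :: "'a measure" +
  fixes W :: "nat \<Rightarrow> real \<Rightarrow> 'a \<Rightarrow> real"
    and A :: "nat \<Rightarrow> (real \<Rightarrow> real) \<Rightarrow> 'a \<Rightarrow> real"
    and d :: nat
  assumes wiener: "i < d \<Longrightarrow> wiener_process01 M (W i)"
    and indep_paths: "indep_vars (\<lambda>_. PiM {0..1} (\<lambda>_. borel)) (\<lambda>i \<omega>. \<lambda>t\<in>{0..1}. W i t \<omega>) {..<d}"
    and ito: "i < d \<Longrightarrow> f \<in> L2_01 \<Longrightarrow> is_ito_integral M (W i) f (A i f)"
begin

definition meas_sqdist :: "(real \<Rightarrow> real) \<Rightarrow> (real \<Rightarrow> real) \<Rightarrow> 'a \<Rightarrow> real" where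
  "meas_sqdist f g \<omega> = (\<Sum>i<d. (A i f \<omega> - A i g \<omega>)\<^sup>2)"

lemma measurable_meas_sqdist:
  assumes "f \<in> L2_01" "g \<in> L2_01"
  shows "meas_sqdist f g \<in> borel_measurable M"
proof -
  have "A i f \<in> borel_measurable M" "A i g \<in> borel_measurable M" if "i < d" for i
    using ito[OF that] assms by (auto simp: is_ito_integral_iff)
  then show ?thesis unfolding meas_sqdist_def[abs_def] by (intro borel_measurable_sum) auto
qed

lemma step_approximations:
  assumes "f \<in> L2_01"
  obtains n ts cs where "\<And>i. i < d \<Longrightarrow> step_approximation M (W i) f (A i f) (n i) (ts i) (cs i)"
proof -
  have "\<forall>i. \<exists>n ts cs. i < d \<longrightarrow> step_approximation M (W i) f (A i f) n ts cs"
    using ito assms by (auto simp: is_ito_integral_iff)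
  then show ?thesis using that by metis
qed

lemma nn_integral_exp_sum_power2_paths:
  assumes "\<And>i. i < d \<Longrightarrow> \<Phi> i \<in> borel_measurable (PiM {0..1} (\<lambda>_. borel))"
  shows "(\<integral>\<^sup>+\<omega>. ennreal (exp (\<mu> * (\<Sum>i<d. (\<Phi> i (\<lambda>t\<in>{0..1}. W i t \<omega>))\<^sup>2))) \<partial>M)
       = (\<Prod>i<d. \<integral>\<^sup>+\<omega>. ennreal (exp (\<mu> * (\<Phi> i (\<lambda>t\<in>{0..1}. W i t \<omega>))\<^sup>2)) \<partial>M)"
proof -
  have "indep_vars (\<lambda>_. borel) (\<lambda>i \<omega>. ennreal (exp (\<mu> * (\<Phi> i (\<lambda>t\<in>{0..1}. W i t \<omega>))\<^sup>2))) {..<d}"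
    using assms by (intro indep_vars_compose2[OF indep_paths]) auto
  then have "(\<integral>\<^sup>+\<omega>. (\<Prod>i<d. ennreal (exp (\<mu> * (\<Phi> i (\<lambda>t\<in>{0..1}. W i t \<omega>))\<^sup>2))) \<partial>M)
      = (\<Prod>i<d. \<integral>\<^sup>+\<omega>. ennreal (exp (\<mu> * (\<Phi> i (\<lambda>t\<in>{0..1}. W i t \<omega>))\<^sup>2)) \<partial>M)"
    by (intro indep_vars_nn_integral) auto
  then show ?thesis by (simp add: sum_distrib_left exp_sum prod_ennreal)
qed

lemma nn_integral_exp_sum_power2_step_ito_diff:
  assumes part: "\<And>i. i < d \<Longrightarrow> partition01 (n1 i) (t1 i) \<and> partition01 (n2 i) (t2 i)"
    and \<mu>: "\<And>i. i < d \<Longrightarrow>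
      2 * \<mu> * (L2norm01 (\<lambda>s. step_fun (n1 i) (t1 i) (c1 i) s - step_fun (n2 i) (t2 i) (c2 i) s))\<^sup>2 < 1"
  shows "(\<integral>\<^sup>+\<omega>. ennreal (exp (\<mu> * (\<Sum>i<d. (step_ito (W i) (n1 i) (t1 i) (c1 i) \<omega>
                                     - step_ito (W i) (n2 i) (t2 i) (c2 i) \<omega>)\<^sup>2))) \<partial>M)
       = ennreal (\<Prod>i<d. 1 / sqrt (1 - 2 * \<mu> *
           (L2norm01 (\<lambda>s. step_fun (n1 i) (t1 i) (c1 i) s - step_fun (n2 i) (t2 i) (c2 i) s))\<^sup>2))"
proof -
  define \<Phi> where "\<Phi> i x = step_ito (\<lambda>t x. x t) (n1 i) (t1 i) (c1 i) x - step_ito (\<lambda>t x. x t) (n2 i) (t2 i) (c2 i) x"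
    for i x
  have path: "step_ito (W i) (n1 i) (t1 i) (c1 i) \<omega> - step_ito (W i) (n2 i) (t2 i) (c2 i) \<omega>
      = \<Phi> i (\<lambda>t\<in>{0..1}. W i t \<omega>)" if "i < d" for i \<omega>
    unfolding \<Phi>_def using part[OF that] by (simp add: step_ito_eq_path[of _ _ "W i"])
  have "(\<integral>\<^sup>+\<omega>. ennreal (exp (\<mu> * (\<Sum>i<d. (step_ito (W i) (n1 i) (t1 i) (c1 i) \<omega>
                                     - step_ito (W i) (n2 i) (t2 i) (c2 i) \<omega>)\<^sup>2))) \<partial>M)
      = (\<integral>\<^sup>+\<omega>. ennreal (exp (\<mu> * (\<Sum>i<d. (\<Phi> i (\<lambda>t\<in>{0..1}. W i t \<omega>))\<^sup>2))) \<partial>M)"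
    using path by (intro nn_integral_cong) simp
  also have "\<dots> = (\<Prod>i<d. \<integral>\<^sup>+\<omega>. ennreal (exp (\<mu> * (\<Phi> i (\<lambda>t\<in>{0..1}. W i t \<omega>))\<^sup>2)) \<partial>M)"
    using part unfolding \<Phi>_def
    by (intro nn_integral_exp_sum_power2_paths borel_measurable_diff step_ito_path_measurable) auto
  also have "\<dots> = (\<Prod>i<d. ennreal (1 / sqrt (1 - 2 * \<mu> *
           (L2norm01 (\<lambda>s. step_fun (n1 i) (t1 i) (c1 i) s - step_fun (n2 i) (t2 i) (c2 i) s))\<^sup>2)))"
    using path[symmetric] part \<mu> wiener by (simp add: nn_integral_exp_step_ito_diff_power2)
  also have "\<dots> = ennreal (\<Prod>i<d. 1 / sqrt (1 - 2 * \<mu> *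
           (L2norm01 (\<lambda>s. step_fun (n1 i) (t1 i) (c1 i) s - step_fun (n2 i) (t2 i) (c2 i) s))\<^sup>2))"
    using \<mu> by (intro prod_ennreal) (simp add: less_imp_le)
  finally show ?thesis .
qed

lemma step_diff_approximations:
  assumes g: "g \<in> L2_01" and h: "h \<in> L2_01"
  obtains n1 t1 n2 t2 c1 c2 where
    "\<And>i (j::nat). i < d \<Longrightarrow> partition01 (n1 i j) (t1 i j) \<and> partition01 (n2 i j) (t2 i j)"
    "\<And>i. i < d \<Longrightarrow> (\<lambda>j. L2norm01 (\<lambda>s. step_fun (n1 i j) (t1 i j) (c1 i j) s - step_fun (n2 i j) (t2 i j) (c2 i j) s))
                      \<longlonglongrightarrow> L2norm01 (\<lambda>t. g t - h t)"
    "AE \<omega> in M. \<forall>i\<in>{..<d}. (\<lambda>j. step_ito (W i) (n1 i j) (t1 i j) (c1 i j) \<omega> - step_ito (W i) (n2 i j) (t2 i j) (c2 i j) \<omega>)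
                      \<longlonglongrightarrow> A i g \<omega> - A i h \<omega>"
proof -
  obtain ng tg cg where ag: "\<And>i. i < d \<Longrightarrow> step_approximation M (W i) g (A i g) (ng i) (tg i) (cg i)"
    using step_approximations[OF g] by blast
  obtain nh th ch where ah: "\<And>i. i < d \<Longrightarrow> step_approximation M (W i) h (A i h) (nh i) (th i) (ch i)"
    using step_approximations[OF h] by blast
  define S where "S i j \<omega> = step_ito (W i) (ng i j) (tg i j) (cg i j) \<omega> - step_ito (W i) (nh i j) (th i j) (ch i j) \<omega>"
    for i j \<omega>
  have part: "partition01 (ng i j) (tg i j) \<and> partition01 (nh i j) (th i j)" if "i < d" for i j
    using ag[OF that] ah[OF that] by (simp add: step_approximation_def)
  have L2: "integrable M (\<lambda>\<omega>. ((A i g \<omega> - A i h \<omega>) - S i j \<omega>)\<^sup>2)"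
    "(\<lambda>j. \<integral>\<omega>. ((A i g \<omega> - A i h \<omega>) - S i j \<omega>)\<^sup>2 \<partial>M) \<longlonglongrightarrow> 0" if i: "i < d" for i j
  proof -
    have "\<forall>t\<in>{0..1}. W i t \<in> borel_measurable M" using wiener[OF i] by (simp add: wiener_process01_def)
    then have "\<And>j. step_ito (W i) (ng i j) (tg i j) (cg i j) \<in> borel_measurable M"
      "\<And>j. step_ito (W i) (nh i j) (th i j) (ch i j) \<in> borel_measurable M"
      using part[OF i] by (auto intro: step_ito_measurable)
    moreover have "A i g \<in> borel_measurable M" "A i h \<in> borel_measurable M"
      using ito[OF i g] ito[OF i h] by (simp_all add: is_ito_integral_iff)
    ultimately show "integrable M (\<lambda>\<omega>. ((A i g \<omega> - A i h \<omega>) - S i j \<omega>)\<^sup>2)"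
      "(\<lambda>j. \<integral>\<omega>. ((A i g \<omega> - A i h \<omega>) - S i j \<omega>)\<^sup>2 \<partial>M) \<longlonglongrightarrow> 0"
      using integral_power2_diff_diff_tendsto[where a="A i g" and b="A i h"
          and s="\<lambda>j. step_ito (W i) (ng i j) (tg i j) (cg i j)" and t="\<lambda>j. step_ito (W i) (nh i j) (th i j) (ch i j)"]
        ag[OF i] ah[OF i]
      unfolding S_def step_approximation_def by simp_all
  qed
  obtain r where r: "strict_mono r" and conv: "AE \<omega> in M. \<forall>i\<in>{..<d}. (\<lambda>j. S i (r j) \<omega>) \<longlonglongrightarrow> A i g \<omega> - A i h \<omega>"
    by (rule L2_tendsto_imp_AE_subseq[of "{..<d}" M "\<lambda>i \<omega>. A i g \<omega> - A i h \<omega>" S]) (use L2 in auto)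
  show ?thesis
  proof (rule that[of "\<lambda>i j. ng i (r j)" "\<lambda>i j. tg i (r j)" "\<lambda>i j. nh i (r j)" "\<lambda>i j. th i (r j)"
        "\<lambda>i j. cg i (r j)" "\<lambda>i j. ch i (r j)"])
    fix i assume i: "i < d"
    have "(\<lambda>j. L2norm01 (\<lambda>s. step_fun (ng i j) (tg i j) (cg i j) s - step_fun (nh i j) (th i j) (ch i j) s))
        \<longlonglongrightarrow> L2norm01 (\<lambda>t. g t - h t)"
      using ag[OF i] ah[OF i] part[OF i]
      by (intro L2norm01_diff_tendsto[OF g h] step_fun_in_L2_01) (auto simp: step_approximation_def)
    from LIMSEQ_subseq_LIMSEQ[OF this r]
    show "(\<lambda>j. L2norm01 (\<lambda>s. step_fun (ng i (r j)) (tg i (r j)) (cg i (r j)) s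
        - step_fun (nh i (r j)) (th i (r j)) (ch i (r j)) s)) \<longlonglongrightarrow> L2norm01 (\<lambda>t. g t - h t)"
      by (simp add: o_def)
  qed (use part conv in \<open>simp_all add: S_def\<close>)
qed

lemma nn_integral_exp_meas_sqdist_le:
  assumes g: "g \<in> L2_01" and h: "h \<in> L2_01" and \<mu>: "2 * \<mu> * (L2norm01 (\<lambda>t. g t - h t))\<^sup>2 < 1"
  shows "(\<integral>\<^sup>+\<omega>. ennreal (exp (\<mu> * meas_sqdist g h \<omega>)) \<partial>M)
           \<le> ennreal ((1 / sqrt (1 - 2 * \<mu> * (L2norm01 (\<lambda>t. g t - h t))\<^sup>2)) ^ d)"
proof -
  define \<sigma>2 where "\<sigma>2 = (L2norm01 (\<lambda>t. g t - h t))\<^sup>2"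
  obtain n1 t1 n2 t2 c1 c2 where part: "\<And>i (j::nat). i < d \<Longrightarrow> partition01 (n1 i j) (t1 i j) \<and> partition01 (n2 i j) (t2 i j)"
    and var: "\<And>i. i < d \<Longrightarrow> (\<lambda>j. L2norm01 (\<lambda>s. step_fun (n1 i j) (t1 i j) (c1 i j) s
                                  - step_fun (n2 i j) (t2 i j) (c2 i j) s)) \<longlonglongrightarrow> L2norm01 (\<lambda>t. g t - h t)"
    and conv: "AE \<omega> in M. \<forall>i\<in>{..<d}. (\<lambda>j. step_ito (W i) (n1 i j) (t1 i j) (c1 i j) \<omega>
                                  - step_ito (W i) (n2 i j) (t2 i j) (c2 i j) \<omega>) \<longlonglongrightarrow> A i g \<omega> - A i h \<omega>"
    by (rule step_diff_approximations[OF g h]) blast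
  define S where "S i j \<omega> = step_ito (W i) (n1 i j) (t1 i j) (c1 i j) \<omega> - step_ito (W i) (n2 i j) (t2 i j) (c2 i j) \<omega>"
    for i j \<omega>
  define v where "v i j = (L2norm01 (\<lambda>s. step_fun (n1 i j) (t1 i j) (c1 i j) s - step_fun (n2 i j) (t2 i j) (c2 i j) s))\<^sup>2"
    for i j
  define G where "G j \<omega> = ennreal (exp (\<mu> * (\<Sum>i<d. (S i j \<omega>)\<^sup>2)))" for j \<omega>
  have v: "(\<lambda>j. v i j) \<longlonglongrightarrow> \<sigma>2" if "i < d" for i
    unfolding v_def \<sigma>2_def by (rule tendsto_power[OF var[OF that]])
  have G_meas: "G j \<in> borel_measurable M" for j
  proof -
    have "S i j \<in> borel_measurable M" if "i < d" for i
      using wiener[OF that] part[OF that] unfolding S_def[abs_def] wiener_process01_def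
      by (intro borel_measurable_diff step_ito_measurable) auto
    then show ?thesis
      unfolding G_def[abs_def]
      by (intro measurable_compose[OF _ measurable_ennreal] borel_measurable_exp borel_measurable_times
          borel_measurable_const borel_measurable_sum borel_measurable_power) auto
  qed
  have G_conv: "AE \<omega> in M. (\<lambda>j. G j \<omega>) \<longlonglongrightarrow> ennreal (exp (\<mu> * meas_sqdist g h \<omega>))"
    using conv unfolding G_def S_def meas_sqdist_def
    by eventually_elim (intro tendsto_ennrealI tendsto_exp tendsto_mult tendsto_const tendsto_sum tendsto_power, simp)
  have small: "\<forall>\<^sub>F j in sequentially. \<forall>i\<in>{..<d}. 2 * \<mu> * v i j < 1"
    using \<mu> v unfolding \<sigma>2_def
    by (intro eventually_ball_finite ballI order_tendstoD(2)[OF tendsto_mult_left]) auto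
  have "(\<lambda>j. \<Prod>i<d. 1 / sqrt (1 - 2 * \<mu> * v i j)) \<longlonglongrightarrow> (\<Prod>i<d. 1 / sqrt (1 - 2 * \<mu> * \<sigma>2))"
    using v \<mu> unfolding \<sigma>2_def
    by (intro tendsto_prod tendsto_divide tendsto_const tendsto_real_sqrt tendsto_diff tendsto_mult) auto
  then have "(\<lambda>j. ennreal (\<Prod>i<d. 1 / sqrt (1 - 2 * \<mu> * v i j))) \<longlonglongrightarrow> ennreal ((1 / sqrt (1 - 2 * \<mu> * \<sigma>2)) ^ d)"
    by (simp add: tendsto_ennrealI)
  moreover have "\<forall>\<^sub>F j in sequentially. ennreal (\<Prod>i<d. 1 / sqrt (1 - 2 * \<mu> * v i j)) = (\<integral>\<^sup>+\<omega>. G j \<omega> \<partial>M)"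
    using small
    by eventually_elim (simp add: G_def S_def v_def nn_integral_exp_sum_power2_step_ito_diff part)
  ultimately have "(\<lambda>j. \<integral>\<^sup>+\<omega>. G j \<omega> \<partial>M) \<longlonglongrightarrow> ennreal ((1 / sqrt (1 - 2 * \<mu> * \<sigma>2)) ^ d)"
    by (rule Lim_transform_eventually)
  then show ?thesis
    using nn_integral_le_of_AE_tendsto[OF G_meas G_conv] unfolding \<sigma>2_def by simp
qed

lemma prob_meas_sqdist_less:
  assumes f: "f \<in> L2_01" and g: "g \<in> L2_01" and pos: "0 < L2norm01 (\<lambda>t. f t - g t)"
    and \<tau>: "0 < \<tau>" "\<tau> < 1"
  shows "prob {\<omega>\<in>space M. meas_sqdist f g \<omega> < real d * (1 - \<tau>) * (L2norm01 (\<lambda>t. f t - g t))\<^sup>2}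
           \<le> exp (real d / 2 * (\<tau> + ln (1 - \<tau>)))"
proof -
  define s where "s = L2norm01 (\<lambda>t. f t - g t)"
  define \<mu> where "\<mu> = - \<tau> / (2 * (1 - \<tau>) * s\<^sup>2)" \<comment> \<open>the optimal Chernoff parameter\<close>
  define c where "c = real d * (1 - \<tau>) * s\<^sup>2"
  have s: "0 < s" using pos by (simp add: s_def)
  have \<mu>: "\<mu> < 0" and \<mu>s: "1 - 2 * \<mu> * s\<^sup>2 = 1 / (1 - \<tau>)" and \<mu>c: "- (\<mu> * c) = real d / 2 * \<tau>"
    using s \<tau> unfolding \<mu>_def c_def by (auto simp: field_simps divide_neg_pos)
  have "\<mu> * s\<^sup>2 < 0" using \<mu> s by (simp add: mult_neg_pos)
  then have "2 * \<mu> * s\<^sup>2 < 1" by linarith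
  then have "(\<integral>\<^sup>+\<omega>. ennreal (exp (\<mu> * meas_sqdist f g \<omega>)) \<partial>M) \<le> ennreal ((1 / sqrt (1 - 2 * \<mu> * s\<^sup>2)) ^ d)"
    using nn_integral_exp_meas_sqdist_le[OF f g] unfolding s_def by simp
  also have "(1 / sqrt (1 - 2 * \<mu> * s\<^sup>2)) ^ d = exp (real d / 2 * ln (1 - \<tau>))"
    using \<tau> unfolding \<mu>s by (intro inverse_sqrt_inverse_power) simp
  finally have "prob {\<omega>\<in>space M. \<mu> * c \<le> \<mu> * meas_sqdist f g \<omega>} \<le> exp (real d / 2 * ln (1 - \<tau>)) * exp (- (\<mu> * c))"
    by (rule Chernoff_bound[OF measurable_meas_sqdist[OF f g]])
  also have "\<dots> = exp (real d / 2 * (\<tau> + ln (1 - \<tau>)))"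
    unfolding \<mu>c by (simp add: mult_exp_exp algebra_simps)
  moreover have "prob {\<omega>\<in>space M. meas_sqdist f g \<omega> < c} \<le> prob {\<omega>\<in>space M. \<mu> * c \<le> \<mu> * meas_sqdist f g \<omega>}"
  proof (rule finite_measure_mono)
    show "{\<omega>\<in>space M. \<mu> * c \<le> \<mu> * meas_sqdist f g \<omega>} \<in> sets M"
      using measurable_meas_sqdist[OF f g] by measurable
  qed (use \<mu> in \<open>auto intro: mult_left_mono_neg less_imp_le\<close>)
  ultimately show ?thesis unfolding c_def s_def by linarith
qed

lemma prob_meas_sqdist_greater_pos:
  assumes f: "f \<in> L2_01" and g: "g \<in> L2_01" and s: "0 < s" "L2norm01 (\<lambda>t. f t - g t) \<le> s" and \<tau>: "0 < \<tau>"
  shows "prob {\<omega>\<in>space M. real d * (1 + \<tau>) * s\<^sup>2 < meas_sqdist f g \<omega>}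
           \<le> exp (- (real d / 2) * (\<tau> - ln (1 + \<tau>)))"
proof -
  define \<sigma> where "\<sigma> = L2norm01 (\<lambda>t. f t - g t)"
  define \<mu> where "\<mu> = \<tau> / (2 * (1 + \<tau>) * s\<^sup>2)" \<comment> \<open>the optimal Chernoff parameter\<close>
  define c where "c = real d * (1 + \<tau>) * s\<^sup>2"
  have "0 < 1 + \<tau>" using \<tau> by simp
  then have \<mu>: "0 < \<mu>" and \<mu>s: "1 - 2 * \<mu> * s\<^sup>2 = 1 / (1 + \<tau>)" and \<mu>c: "\<mu> * c = real d / 2 * \<tau>"
    using s \<tau> unfolding \<mu>_def c_def by (simp_all add: divide_simps)
  have "\<sigma>\<^sup>2 \<le> s\<^sup>2" using s L2norm01_nonneg unfolding \<sigma>_def by (intro power_mono) auto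
  then have le: "2 * \<mu> * \<sigma>\<^sup>2 \<le> 2 * \<mu> * s\<^sup>2" using \<mu> by simp
  moreover have "0 < 1 - 2 * \<mu> * s\<^sup>2" unfolding \<mu>s using \<tau> by simp
  ultimately have "(\<integral>\<^sup>+\<omega>. ennreal (exp (\<mu> * meas_sqdist f g \<omega>)) \<partial>M) \<le> ennreal ((1 / sqrt (1 - 2 * \<mu> * \<sigma>\<^sup>2)) ^ d)"
    using nn_integral_exp_meas_sqdist_le[OF f g] unfolding \<sigma>_def by simp
  also have "\<dots> \<le> ennreal ((1 / sqrt (1 - 2 * \<mu> * s\<^sup>2)) ^ d)"
    using le \<open>0 < 1 - 2 * \<mu> * s\<^sup>2\<close>
    by (intro ennreal_leI power_mono divide_left_mono mult_pos_pos) auto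
  also have "(1 / sqrt (1 - 2 * \<mu> * s\<^sup>2)) ^ d = exp (real d / 2 * ln (1 + \<tau>))"
    using \<tau> unfolding \<mu>s by (intro inverse_sqrt_inverse_power) simp
  finally have "prob {\<omega>\<in>space M. \<mu> * c \<le> \<mu> * meas_sqdist f g \<omega>} \<le> exp (real d / 2 * ln (1 + \<tau>)) * exp (- (\<mu> * c))"
    by (rule Chernoff_bound[OF measurable_meas_sqdist[OF f g]])
  also have "\<dots> = exp (- (real d / 2) * (\<tau> - ln (1 + \<tau>)))"
    unfolding \<mu>c by (simp add: mult_exp_exp field_simps)
  moreover have "prob {\<omega>\<in>space M. c < meas_sqdist f g \<omega>} \<le> prob {\<omega>\<in>space M. \<mu> * c \<le> \<mu> * meas_sqdist f g \<omega>}"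
  proof (rule finite_measure_mono)
    show "{\<omega>\<in>space M. \<mu> * c \<le> \<mu> * meas_sqdist f g \<omega>} \<in> sets M"
      using measurable_meas_sqdist[OF f g] by measurable
  qed (use \<mu> in \<open>auto intro: mult_left_mono less_imp_le\<close>)
  ultimately show ?thesis unfolding c_def by linarith
qed

lemma prob_meas_sqdist_greater:
  assumes f: "f \<in> L2_01" and g: "g \<in> L2_01" and s: "L2norm01 (\<lambda>t. f t - g t) \<le> s" and \<tau>: "0 < \<tau>"
  shows "prob {\<omega>\<in>space M. real d * (1 + \<tau>) * s\<^sup>2 < meas_sqdist f g \<omega>}
           \<le> exp (- (real d / 2) * (\<tau> - ln (1 + \<tau>)))"
proof (cases "0 < s")
  case True
  then show ?thesis by (rule prob_meas_sqdist_greater_pos[OF f g _ s \<tau>])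
next
  case False
  then have "s = 0" using s L2norm01_nonneg[of "\<lambda>t. f t - g t"] by auto
  show ?thesis
  proof (cases "d = 0")
    case True
    then show ?thesis by (simp add: meas_sqdist_def)
  next
    case False
    then have "0 < d" by simp
    \<comment> \<open>threshold 0: approach it from above by thresholds \<open>d (1 + \<tau>) s'\<^sup>2\<close> with \<open>s' > 0\<close>\<close>
    have "prob {\<omega>\<in>space M. 0 < meas_sqdist f g \<omega>} \<le> exp (- (real d / 2) * (\<tau> - ln (1 + \<tau>)))"
  proof (rule prob_greater_le_of_greater[OF measurable_meas_sqdist[OF f g]])
    fix c :: real assume "0 < c"
    define s' where "s' = sqrt (c / (real d * (1 + \<tau>)))"
    have "c = real d * (1 + \<tau>) * s'\<^sup>2" "0 < s'"
      using \<open>0 < c\<close> \<open>0 < d\<close> \<tau> unfolding s'_def by simp_all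
    then show "prob {\<omega>\<in>space M. c < meas_sqdist f g \<omega>} \<le> exp (- (real d / 2) * (\<tau> - ln (1 + \<tau>)))"
      using prob_meas_sqdist_greater_pos[OF f g, of s' \<tau>] s \<open>s = 0\<close> \<tau> by simp
  qed
  then show ?thesis using \<open>s = 0\<close> by simp
  qed
qed

lemma meas_sqdist_bounds_event:
  assumes B: "finite B" "B \<subseteq> L2_01" and f: "f \<in> L2_01" and ft: "ft \<in> L2_01" "L2norm01 (\<lambda>t. f t - ft t) \<le> \<delta>"
    and sep: "\<And>g. g \<in> B \<Longrightarrow> 0 < L2norm01 (\<lambda>t. f t - g t)"
    and \<tau>: "0 < \<tau>\<^sub>1" "0 < \<tau>\<^sub>2" "\<tau>\<^sub>2 < 1"
  shows "\<exists>Ev\<in>sets M.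
           1 - card B * exp (real d / 2 * (\<tau>\<^sub>2 + ln (1 - \<tau>\<^sub>2))) - exp (- (real d / 2) * (\<tau>\<^sub>1 - ln (1 + \<tau>\<^sub>1)))
             \<le> prob Ev \<and>
           (\<forall>\<omega>\<in>Ev. meas_sqdist f ft \<omega> \<le> real d * (1 + \<tau>\<^sub>1) * \<delta>\<^sup>2) \<and>
           (\<forall>\<omega>\<in>Ev. \<forall>g\<in>B. real d * (1 - \<tau>\<^sub>2) * (L2norm01 (\<lambda>t. f t - g t))\<^sup>2 \<le> meas_sqdist f g \<omega>)"
proof -
  define Bad0 where "Bad0 = {\<omega>\<in>space M. real d * (1 + \<tau>\<^sub>1) * \<delta>\<^sup>2 < meas_sqdist f ft \<omega>}"
  define Bad where "Bad g = {\<omega>\<in>space M. meas_sqdist f g \<omega> < real d * (1 - \<tau>\<^sub>2) * (L2norm01 (\<lambda>t. f t - g t))\<^sup>2}" for g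
  have sets: "Bad0 \<in> sets M" "\<And>g. g \<in> B \<Longrightarrow> Bad g \<in> sets M"
    using measurable_meas_sqdist[OF f ft(1)] measurable_meas_sqdist[OF f] B(2) unfolding Bad0_def Bad_def by auto
  define U where "U = Bad0 \<union> (\<Union>g\<in>B. Bad g)"
  have U: "U \<in> sets M" unfolding U_def using sets B(1) by auto
  have "prob U \<le> prob Bad0 + (\<Sum>g\<in>B. prob (Bad g))"
    using sets B(1) measure_Un_le[of Bad0 M "\<Union>g\<in>B. Bad g"] finite_measure_subadditive_finite[of B Bad]
    unfolding U_def by fastforce
  also have "\<dots> \<le> exp (- (real d / 2) * (\<tau>\<^sub>1 - ln (1 + \<tau>\<^sub>1))) + card B * exp (real d / 2 * (\<tau>\<^sub>2 + ln (1 - \<tau>\<^sub>2)))"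
  proof (rule add_mono)
    show "prob Bad0 \<le> exp (- (real d / 2) * (\<tau>\<^sub>1 - ln (1 + \<tau>\<^sub>1)))"
      unfolding Bad0_def by (rule prob_meas_sqdist_greater[OF f ft \<tau>(1)])
    have "prob (Bad g) \<le> exp (real d / 2 * (\<tau>\<^sub>2 + ln (1 - \<tau>\<^sub>2)))" if "g \<in> B" for g
      unfolding Bad_def using that B(2) by (intro prob_meas_sqdist_less[OF f _ sep \<tau>(2,3)]) auto
    then show "(\<Sum>g\<in>B. prob (Bad g)) \<le> card B * exp (real d / 2 * (\<tau>\<^sub>2 + ln (1 - \<tau>\<^sub>2)))"
      by (rule sum_bounded_above)
  qed
  finally have "1 - card B * exp (real d / 2 * (\<tau>\<^sub>2 + ln (1 - \<tau>\<^sub>2))) - exp (- (real d / 2) * (\<tau>\<^sub>1 - ln (1 + \<tau>\<^sub>1)))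
      \<le> prob (space M - U)"
    using prob_compl[OF U] by linarith
  moreover have "space M - U \<in> sets M" using U by auto
  ultimately show ?thesis
    by (intro bexI[of _ "space M - U"]) (auto simp: U_def Bad0_def Bad_def not_less)
qed

lemma nearest_candidate_error_bound:
  assumes C: "finite C" "C \<subseteq> L2_01" "real (card C) \<le> N"
    and f: "f \<in> L2_01" and ft: "ft \<in> C" "L2norm01 (\<lambda>t. f t - ft t) \<le> \<delta>"
    and \<tau>: "0 < \<tau>\<^sub>1" "0 < \<tau>\<^sub>2" "\<tau>\<^sub>2 < 1"
  shows "\<exists>Ev\<in>sets M.
           prob Ev \<ge> 1 - N * exp (real d / 2 * (\<tau>\<^sub>2 + ln (1 - \<tau>\<^sub>2))) - exp (- (real d / 2) * (\<tau>\<^sub>1 - ln (1 + \<tau>\<^sub>1))) \<and>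
           (\<forall>\<omega>\<in>Ev. \<forall>fhat\<in>C. (\<forall>g\<in>C. meas_sqdist f fhat \<omega> \<le> meas_sqdist f g \<omega>)
              \<longrightarrow> L2norm01 (\<lambda>t. fhat t - f t) \<le> \<delta> * sqrt ((1 + \<tau>\<^sub>1) / (1 - \<tau>\<^sub>2)))"
proof (cases "d = 0")
  case True
  then show ?thesis using C(3) by (intro bexI[of _ "{}"]) auto
next
  case False
  define B where "B = {g\<in>C. \<delta> * sqrt ((1 + \<tau>\<^sub>1) / (1 - \<tau>\<^sub>2)) < L2norm01 (\<lambda>t. g t - f t)}"
  have \<delta>: "0 \<le> \<delta>" using ft(2) L2norm01_nonneg order_trans by blast
  then have "0 \<le> \<delta> * sqrt ((1 + \<tau>\<^sub>1) / (1 - \<tau>\<^sub>2))" using \<tau> by simp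
  then have sep: "0 < L2norm01 (\<lambda>t. f t - g t)" if "g \<in> B" for g
    using that L2norm01_commute[of g f] unfolding B_def by auto
  have "finite B" "B \<subseteq> L2_01" "ft \<in> L2_01" using C ft(1) unfolding B_def by auto
  from meas_sqdist_bounds_event[OF this(1,2) f this(3) ft(2) sep \<tau>] obtain Ev where Ev: "Ev \<in> sets M"
    "1 - card B * exp (real d / 2 * (\<tau>\<^sub>2 + ln (1 - \<tau>\<^sub>2))) - exp (- (real d / 2) * (\<tau>\<^sub>1 - ln (1 + \<tau>\<^sub>1)))
       \<le> prob Ev"
    and ft_close: "\<forall>\<omega>\<in>Ev. meas_sqdist f ft \<omega> \<le> real d * (1 + \<tau>\<^sub>1) * \<delta>\<^sup>2"
    and B_far: "\<forall>\<omega>\<in>Ev. \<forall>g\<in>B. real d * (1 - \<tau>\<^sub>2) * (L2norm01 (\<lambda>t. f t - g t))\<^sup>2 \<le> meas_sqdist f g \<omega>"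
    by blast
  have "real (card B) \<le> N" using C card_mono[of C B] unfolding B_def by auto
  then have "real (card B) * exp (real d / 2 * (\<tau>\<^sub>2 + ln (1 - \<tau>\<^sub>2))) \<le> N * exp (real d / 2 * (\<tau>\<^sub>2 + ln (1 - \<tau>\<^sub>2)))"
    by (intro mult_right_mono) auto
  with Ev(2) have "1 - N * exp (real d / 2 * (\<tau>\<^sub>2 + ln (1 - \<tau>\<^sub>2))) - exp (- (real d / 2) * (\<tau>\<^sub>1 - ln (1 + \<tau>\<^sub>1)))
      \<le> prob Ev" by linarith
  moreover have "L2norm01 (\<lambda>t. fhat t - f t) \<le> \<delta> * sqrt ((1 + \<tau>\<^sub>1) / (1 - \<tau>\<^sub>2))"
    if \<omega>: "\<omega> \<in> Ev" and fhat: "fhat \<in> C" and min: "\<forall>g\<in>C. meas_sqdist f fhat \<omega> \<le> meas_sqdist f g \<omega>" for \<omega> fhat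
  proof (cases "fhat \<in> B")
    case True
    have "real d * (1 - \<tau>\<^sub>2) * (L2norm01 (\<lambda>t. fhat t - f t))\<^sup>2
        = real d * (1 - \<tau>\<^sub>2) * (L2norm01 (\<lambda>t. f t - fhat t))\<^sup>2"
      using L2norm01_commute[of fhat f] by simp
    also have "\<dots> \<le> meas_sqdist f fhat \<omega>" using B_far \<omega> True by blast
    also have "\<dots> \<le> meas_sqdist f ft \<omega>" using min ft(1) by blast
    also have "\<dots> \<le> real d * (1 + \<tau>\<^sub>1) * \<delta>\<^sup>2" using ft_close \<omega> by blast
    finally have "real d * (1 - \<tau>\<^sub>2) * (L2norm01 (\<lambda>t. fhat t - f t))\<^sup>2 \<le> real d * (1 + \<tau>\<^sub>1) * \<delta>\<^sup>2" .
    then show ?thesis using False \<tau> \<delta> by (intro le_mult_sqrt_divide_of_power2_le) auto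
  qed (use fhat in \<open>auto simp: B_def\<close>)
  ultimately show ?thesis using Ev(1) by blast
qed

end

lemma compression_code_codebook:
  assumes "compression_code F r Enc Dec"
  shows "finite (codebook F Enc Dec)" "card (codebook F Enc Dec) \<le> 2 ^ r" "codebook F Enc Dec \<subseteq> L2_01"
proof -
  have sub: "codebook F Enc Dec \<subseteq> Dec ` {1..2 ^ r}"
    using assms unfolding compression_code_def codebook_def by auto
  then show "finite (codebook F Enc Dec)" by (rule finite_subset) simp
  show "card (codebook F Enc Dec) \<le> 2 ^ r"
    using card_mono[OF _ sub] card_image_le[of "{1..2 ^ r}" Dec] by fastforce
  show "codebook F Enc Dec \<subseteq> L2_01"
    using sub assms unfolding compression_code_def by auto
qed

lemma L2norm01_le_distortion:
  assumes "distortion F Enc Dec = ereal \<delta>" "f \<in> F"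
  shows "L2norm01 (\<lambda>t. f t - Dec (Enc f) t) \<le> \<delta>"
  using SUP_upper[OF assms(2), of "\<lambda>f. ereal (L2norm01 (\<lambda>t. f t - Dec (Enc f) t))"] assms(1)
  unfolding distortion_def by simp

theorem theorem10:
  fixes M :: "'a measure"
    and W :: "nat \<Rightarrow> real \<Rightarrow> 'a \<Rightarrow> real"
    and A :: "nat \<Rightarrow> (real \<Rightarrow> real) \<Rightarrow> 'a \<Rightarrow> real"
    and F :: "(real \<Rightarrow> real) set"
    and Enc :: "(real \<Rightarrow> real) \<Rightarrow> nat" and Dec :: "nat \<Rightarrow> (real \<Rightarrow> real)"
    and r d :: nat and \<delta> \<tau>\<^sub>1 \<tau>\<^sub>2 :: real and f\<^sub>o :: "real \<Rightarrow> real"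
  assumes "prob_space M"
    and "\<forall>i<d. wiener_process01 M (W i)"
    and "prob_space.indep_vars M (\<lambda>_. PiM {0..1} (\<lambda>_. borel))
           (\<lambda>i \<omega>. \<lambda>t\<in>{0..1}. W i t \<omega>) {..<d}"
    and "\<forall>i<d. \<forall>f\<in>L2_01. is_ito_integral M (W i) f (A i f)"
    and "F \<subseteq> L2_01"
    and "compression_code F r Enc Dec"
    and "distortion F Enc Dec = ereal \<delta>"
    and "f\<^sub>o \<in> F"
    and "\<tau>\<^sub>1 > 0" and "0 < \<tau>\<^sub>2" and "\<tau>\<^sub>2 < 1"
  shows "\<exists>Ev\<in>sets M.
           measure M Ev \<ge> 1 - 2^r * exp (real d / 2 * (\<tau>\<^sub>2 + ln (1 - \<tau>\<^sub>2)))
                             - exp (- (real d / 2) * (\<tau>\<^sub>1 - ln (1 + \<tau>\<^sub>1))) \<and>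
           (\<forall>\<omega>\<in>Ev. \<forall>fhat\<in>codebook F Enc Dec.
              (\<forall>g\<in>codebook F Enc Dec.
                 (\<Sum>i<d. (A i f\<^sub>o \<omega> - A i fhat \<omega>)\<^sup>2) \<le> (\<Sum>i<d. (A i f\<^sub>o \<omega> - A i g \<omega>)\<^sup>2))
              \<longrightarrow> L2norm01 (\<lambda>t. fhat t - f\<^sub>o t) \<le> \<delta> * sqrt ((1 + \<tau>\<^sub>1) / (1 - \<tau>\<^sub>2)))"
proof -
  interpret wiener_sensing M W A d
    using assms(1-4) by (simp add: wiener_sensing_def wiener_sensing_axioms_def)
  note C = compression_code_codebook[OF assms(6)]
  have "real (card (codebook F Enc Dec)) \<le> 2 ^ r"
    using C(2) by (metis of_nat_le_iff of_nat_numeral of_nat_power)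
  moreover have "Dec (Enc f\<^sub>o) \<in> codebook F Enc Dec" using assms(8) unfolding codebook_def by auto
  ultimately have "\<exists>Ev\<in>sets M.
      prob Ev \<ge> 1 - 2 ^ r * exp (real d / 2 * (\<tau>\<^sub>2 + ln (1 - \<tau>\<^sub>2))) - exp (- (real d / 2) * (\<tau>\<^sub>1 - ln (1 + \<tau>\<^sub>1))) \<and>
      (\<forall>\<omega>\<in>Ev. \<forall>fhat\<in>codebook F Enc Dec.
         (\<forall>g\<in>codebook F Enc Dec. meas_sqdist f\<^sub>o fhat \<omega> \<le> meas_sqdist f\<^sub>o g \<omega>)
         \<longrightarrow> L2norm01 (\<lambda>t. fhat t - f\<^sub>o t) \<le> \<delta> * sqrt ((1 + \<tau>\<^sub>1) / (1 - \<tau>\<^sub>2)))"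
    using assms(5,8) L2norm01_le_distortion[OF assms(7,8)]
    by (intro nearest_candidate_error_bound[OF C(1,3)] assms(9-11)) auto
  then show ?thesis unfolding meas_sqdist_def .
qed

end
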